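(* Let $k\ge 3$ be an integer, $A\geq 1$, $B\geq 1$, $\alpha\in\mathbb{R}$, and suppose that $r\in\mathbb{Z}$ and $q\in\mathbb{N}$ are coprime with $|\alpha-r/q|\leq q^{-2}$. Then for every $\varepsilon>0$, $$\sum_{0<|a|\leq A}|f(a\alpha)|^{2^{k-1}}\ll AB^{2^{k-1}}\Bigl(\frac1q+\frac1B+\frac{q}{AB^k}\Bigr)(ABq)^{\varepsilon},$$ where the sum is over non-zero integers $a$ and the implicit constant depends only on $k$ and $\varepsilon$.
   Context: $e(\alpha)=\exp(2\pi i\alpha)$ and $f(\alpha)=\sum_{1\le|x|\le B}e(\alpha x^k)$, the sum over integers $x$. *)

theory Defs
  imports Complex_Main
begin

definition e :: "real \<Rightarrow> complex" where
  "e t = exp (2 * pi * \<i> * complex_of_real t)"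

definition weyl_f :: "nat \<Rightarrow> real \<Rightarrow> real \<Rightarrow> complex" where
  "weyl_f k B \<alpha> = (\<Sum>x\<in>{x::int. 1 \<le> \<bar>x\<bar> \<and> real_of_int \<bar>x\<bar> \<le> B}. e (\<alpha> * real_of_int x ^ k))"

end

theory Submission
  imports Defs "HOL-Analysis.Harmonic_Numbers" "HOL-Computational_Algebra.Primes"
begin

text \<open>
  Differencing \<open>k - 1\<close> times bounds \<open>|f(\<beta>)|^(2^(k-1))\<close> by \<open>B^(2^(k-1)-k)\<close> times the sum,
  over shifts \<open>h_1, ..., h_(k-1)\<close> in \<open>[-B, B]\<close>, of linear exponential sums with frequency
  \<open>k! h_1 \<cdots> h_(k-1) \<beta>\<close>, each at most \<open>min(B, 2/\<parallel>k! h_1 \<cdots> h_(k-1) \<beta>\<parallel>)\<close>.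
  Put \<open>\<beta> = a \<alpha>\<close>.  The tuples with some \<open>h_i = 0\<close> contribute \<open>O(A B^(2^(k-1)-1))\<close>.  For the others
  \<open>n = |a k! h_1 \<cdots> h_(k-1)| \<le> k! A B^(k-1)\<close> arises from at most \<open>(2 d(n))^k\<close> tuples, so the
  divisor bound reduces their contribution to \<open>(AB)^\<epsilon>\<close> times the sum of \<open>min(B, 1/\<parallel>n \<alpha>\<parallel>)\<close>
  over \<open>n \<le> k! A B^(k-1)\<close>.
  As \<open>|\<alpha> - r/q| \<le> q^-2\<close>, on a block of \<open>q\<close> consecutive \<open>n\<close> the residues \<open>n r mod q\<close> are distinct
  and \<open>\<parallel>n \<alpha>\<parallel>\<close> is within \<open>1/q\<close> of \<open>\<parallel>n r / q\<parallel>\<close>, so each block contributes \<open>O(B + q log q)\<close>.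
\<close>

section \<open>The additive character and linear exponential sums\<close>

lemma e_cis: "e t = cis (2 * pi * t)"
  unfolding e_def cis_conv_exp by (simp add: algebra_simps)

lemma e_add: "e (a + b) = e a * e b"
  unfolding e_cis by (simp add: cis_mult algebra_simps)

lemma norm_e [simp]: "norm (e a) = 1"
  unfolding e_cis by simp

lemma cnj_e: "cnj (e a) = e (- a)"
  unfolding e_cis by (simp add: cis_cnj)

lemma e_mult_cnj: "e a * cnj (e b) = e (a - b)"
  by (simp add: cnj_e e_add[symmetric])

lemma e_of_int [simp]: "e (of_int m) = 1"
  unfolding e_cis by (rule cis_multiple_2pi) simp

lemma e_mult_of_nat: "e (c * of_nat i) = e c ^ i"
  unfolding e_def by (simp add: exp_of_nat_mult[symmetric] mult_ac)

definition dist_to_int :: "real \<Rightarrow> real" where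
  "dist_to_int t = \<bar>t - of_int (round t)\<bar>"

lemma dist_to_int_nonneg: "dist_to_int t \<ge> 0"
  by (simp add: dist_to_int_def)

lemma dist_to_int_le: "dist_to_int t \<le> \<bar>t - of_int m\<bar>"
proof (rule ccontr)
  assume less: "\<not> ?thesis"
  have "\<bar>t - of_int (round t)\<bar> \<le> 1/2"
    using of_int_round_abs_le[of t] by (simp add: abs_minus_commute)
  with less have "\<bar>of_int m - of_int (round t)\<bar> < (1::real)"
    unfolding dist_to_int_def by linarith
  hence "m = round t" by linarith
  with less show False unfolding dist_to_int_def by simp
qed

lemma dist_to_int_uminus [simp]: "dist_to_int (- t) = dist_to_int t"
  using dist_to_int_le[of "-t" "- round t"] dist_to_int_le[of t "- round (-t)"]
  by (simp add: dist_to_int_def abs_minus_commute)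

lemma sin_ge_third:
  assumes "0 \<le> x" "x \<le> pi/2"
  shows "sin x \<ge> x / 3"
proof (cases "x \<le> pi/3")
  case True
  have "\<And>u. \<lbrakk>0 \<le> u; u \<le> x\<rbrakk> \<Longrightarrow> ((\<lambda>x. sin x - x/3) has_real_derivative cos u - 1/3) (at u)"
    by (auto intro!: derivative_eq_intros)
  moreover have "cos u - 1/3 \<ge> 0" if "0 \<le> u" "u \<le> x" for u
  proof -
    have "cos (pi/3) \<le> cos u" using True that by (intro cos_monotone_0_pi_le) auto
    thus ?thesis by (simp add: cos_60)
  qed
  ultimately have "sin x - x/3 \<ge> sin 0 - 0/3"
    using DERIV_nonneg_imp_nondecreasing[OF assms(1)] by blast
  thus ?thesis by simp
next
  case False
  have "sin (pi/3) \<le> sin x" using False assms by (subst sin_mono_le_eq) auto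
  moreover have "sqrt 3 \<ge> (1.7::real)" by (rule real_le_rsqrt) (simp add: power2_eq_square)
  moreover have "x/3 \<le> pi/6" using assms by simp
  moreover have "pi/6 \<le> (0.8::real)" using pi_less_4 by simp
  ultimately show ?thesis by (simp add: sin_60)
qed

lemma norm_1_minus_e: "norm (1 - e t) = 2 * \<bar>sin (pi * t)\<bar>"
proof -
  have "(norm (1 - e t))^2 = (1 - cos (2*pi*t))^2 + (sin (2*pi*t))^2"
    by (simp add: e_cis cis.code cmod_def)
  also have "\<dots> = 2 - 2 * cos (2*(pi*t))"
    using sin_cos_squared_add[of "2*pi*t"] by (simp add: power2_eq_square algebra_simps)
  also have "\<dots> = (2 * \<bar>sin (pi * t)\<bar>)^2"
    by (simp add: cos_double_sin power_mult_distrib)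
  finally show ?thesis by (rule power2_eq_imp_eq) auto
qed

lemma dist_to_int_le_norm_1_minus_e: "dist_to_int c \<le> norm (1 - e c)"
proof -
  define t where "t = c - of_int (round c)"
  have "e c = e (t + of_int (round c))" unfolding t_def by simp
  hence ect: "e c = e t" by (simp add: e_add)
  have t_half: "\<bar>t\<bar> \<le> 1/2"
    unfolding t_def using of_int_round_abs_le[of c] by (simp add: abs_minus_commute)
  have "sin (pi * \<bar>t\<bar>) \<ge> 0" using t_half by (intro sin_ge_zero) auto
  hence "\<bar>sin (pi * t)\<bar> = sin (pi * \<bar>t\<bar>)" by (cases "t \<ge> 0") auto
  also have "\<dots> \<ge> pi * \<bar>t\<bar> / 3"
    using t_half by (intro sin_ge_third) auto
  finally have "\<bar>t\<bar> \<le> 2 * \<bar>sin (pi * t)\<bar>"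
    using pi_ge_two mult_right_mono[OF pi_ge_two abs_ge_zero, of t] by linarith
  thus ?thesis using norm_1_minus_e[of t] ect unfolding dist_to_int_def t_def by simp
qed

lemma norm_sum_e_linear_le:
  fixes a b :: int
  assumes "dist_to_int c > 0"
  shows "norm (\<Sum>x\<in>{a..b}. e (c * of_int x + g)) \<le> 2 / dist_to_int c"
proof -
  define n where "n = nat (b - a + 1)"
  have "{a..b} = (\<lambda>i. a + int i) ` {..<n}"
    unfolding n_def by (auto simp: image_iff intro!: bexI[of _ "nat (x - a)" for x])
  hence "(\<Sum>x\<in>{a..b}. e (c * of_int x + g)) = (\<Sum>i<n. e (c * of_int (a + int i) + g))"
    by (simp add: sum.reindex inj_on_def)
  also have "\<dots> = e (c * of_int a + g) * (\<Sum>i<n. e c ^ i)"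
    by (simp add: sum_distrib_left e_add[symmetric] e_mult_of_nat[symmetric] algebra_simps)
  finally have sum_eq: "(\<Sum>x\<in>{a..b}. e (c * of_int x + g)) = e (c * of_int a + g) * (\<Sum>i<n. e c ^ i)" .
  have "norm (1 - e c) * norm (\<Sum>i<n. e c ^ i) = norm (1 - e c ^ n)"
    by (simp add: one_diff_power_eq flip: norm_mult)
  also have "\<dots> \<le> 2" using norm_triangle_ineq4[of 1 "e c ^ n"] by (simp add: norm_power)
  finally have "dist_to_int c * norm (\<Sum>i<n. e c ^ i) \<le> 2"
    using dist_to_int_le_norm_1_minus_e[of c] by (meson mult_right_mono norm_ge_zero order_trans)
  hence "norm (\<Sum>i<n. e c ^ i) \<le> 2 / dist_to_int c" using assms by (simp add: field_simps)
  thus ?thesis unfolding sum_eq by (simp add: norm_mult)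
qed

definition lin_bound :: "nat \<Rightarrow> real \<Rightarrow> real" where
  "lin_bound N c = (if dist_to_int c = 0 then real N else min (real N) (2 / dist_to_int c))"

lemma lin_bound_le: "lin_bound N c \<le> real N"
  unfolding lin_bound_def by auto

lemma lin_bound_nonneg: "lin_bound N c \<ge> 0"
  unfolding lin_bound_def using dist_to_int_nonneg[of c] by auto

lemma lin_bound_uminus [simp]: "lin_bound N (- c) = lin_bound N c"
  unfolding lin_bound_def by simp

lemma norm_sum_e_linear_le_lin_bound:
  fixes a b :: int
  assumes "{a..b} \<subseteq> {1..int N}"
  shows "norm (\<Sum>x\<in>{a..b}. e (c * of_int x + g)) \<le> lin_bound N c"
proof -
  have "norm (\<Sum>x\<in>{a..b}. e (c * of_int x + g)) \<le> real (card {a..b})"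
    using norm_sum[of "\<lambda>x. e (c * of_int x + g)" "{a..b}"] by simp
  also have "\<dots> \<le> real N"
    using card_mono[OF _ assms] by simp
  finally show ?thesis
    using norm_sum_e_linear_le[where c=c and a=a and b=b and g=g] dist_to_int_nonneg[of c]
    unfolding lin_bound_def by auto
qed

section \<open>Weyl differencing\<close>

fun iter_diff :: "int list \<Rightarrow> (int \<Rightarrow> real) \<Rightarrow> int \<Rightarrow> real" where
  "iter_diff [] \<phi> = \<phi>"
| "iter_diff (h # hs) \<phi> = iter_diff hs (\<lambda>x. \<phi> (x + h) - \<phi> x)"

definition shift_lists :: "nat \<Rightarrow> nat \<Rightarrow> int list set" where
  "shift_lists N j = {hs. set hs \<subseteq> {- int N..int N} \<and> length hs = j}"

lemma finite_shift_lists: "finite (shift_lists N j)"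
  unfolding shift_lists_def by (rule finite_lists_length_eq) simp

lemma card_shift_lists: "card (shift_lists N j) = (2 * N + 1) ^ j"
  unfolding shift_lists_def
  by (simp add: card_lists_length_eq) (simp add: nat_add_distrib nat_mult_distrib)

lemma shift_lists_Suc:
  "shift_lists N (Suc j) = (\<lambda>(h, hs). h # hs) ` ({- int N..int N} \<times> shift_lists N j)"
  unfolding shift_lists_def by (auto simp: image_iff length_Suc_conv)

lemma sum_shift_lists_Suc:
  "(\<Sum>hs\<in>shift_lists N (Suc j). F hs) = (\<Sum>h\<in>{- int N..int N}. \<Sum>hs\<in>shift_lists N j. F (h # hs))"
  by (simp add: shift_lists_Suc sum.reindex inj_on_def sum.cartesian_product case_prod_unfold)

lemma sum_power_two_pow_le:
  fixes g :: "'a \<Rightarrow> real"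
  assumes "\<And>x. x \<in> A \<Longrightarrow> g x \<ge> 0"
  shows "(\<Sum>x\<in>A. g x) ^ (2^j) \<le> real (card A) ^ (2^j - 1) * (\<Sum>x\<in>A. g x ^ (2^j))"
proof (induction j)
  case 0 thus ?case by simp
next
  case (Suc j)
  have "(\<Sum>x\<in>A. g x) ^ (2^Suc j) = ((\<Sum>x\<in>A. g x) ^ (2^j))^2"
    by (simp add: power_mult[symmetric] mult.commute)
  also have "\<dots> \<le> (real (card A) ^ (2^j - 1) * (\<Sum>x\<in>A. g x ^ (2^j)))^2"
    using Suc assms by (intro power_mono) (auto intro!: sum_nonneg zero_le_power)
  also have "\<dots> = real (card A) ^ (2 * (2^j - 1)) * (\<Sum>x\<in>A. g x ^ (2^j))^2"
    by (simp add: power_mult_distrib mult.commute flip: power_mult)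
  also have "\<dots> \<le> real (card A) ^ (2 * (2^j - 1)) * ((\<Sum>x\<in>A. (g x ^ (2^j))^2) * real (card A))"
    by (intro mult_left_mono sum_squared_le_sum_of_squares) auto
  also have "\<dots> = real (card A) ^ (2^Suc j - 1) * (\<Sum>x\<in>A. g x ^ (2^Suc j))"
  proof -
    have "2 * (2^j - 1) + 1 = (2::nat)^Suc j - 1"
      using one_le_power[of "2::nat" j] by (simp only: power_Suc) linarith
    hence "real (card A) ^ (2 * (2^j - 1)) * real (card A) = real (card A) ^ (2^Suc j - 1)"
      by (metis power_Suc2 Suc_eq_plus1)
    moreover have "(g x ^ (2^j))^2 = g x ^ (2^Suc j)" for x
      by (simp add: power_mult[symmetric] mult.commute)
    ultimately show ?thesis by (simp add: algebra_simps)
  qed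
  finally show ?case .
qed

lemma sum_interval_by_shifts:
  fixes a b :: int
  assumes "x \<in> {a..b}" "{a..b} \<subseteq> {1..int N}"
  shows "(\<Sum>y\<in>{a..b}. g y) = (\<Sum>h\<in>{- int N..int N}. if x + h \<in> {a..b} then g (x + h) else 0)"
proof -
  have "(\<Sum>y\<in>{a..b}. g y) = (\<Sum>h\<in>{h\<in>{- int N..int N}. x + h \<in> {a..b}}. g (x + h))"
    using assms by (intro sum.reindex_bij_witness[of _ "\<lambda>h. x + h" "\<lambda>y. y - x"]) auto
  thus ?thesis by (simp only: sum.inter_filter[OF finite_atLeastAtMost])
qed

lemma norm_sum_e_squared_le:
  fixes \<phi> :: "int \<Rightarrow> real" and a b :: int
  assumes "{a..b} \<subseteq> {1..int N}"
  shows "(norm (\<Sum>x\<in>{a..b}. e (\<phi> x)))^2 \<le>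
    (\<Sum>h\<in>{- int N..int N}. norm (\<Sum>x\<in>{max a (a-h)..min b (b-h)}. e (\<phi> (x + h) - \<phi> x)))"
proof -
  let ?I = "{a..b}" and ?H = "{- int N..int N}"
  define S where "S = (\<Sum>x\<in>?I. e (\<phi> x))"
  have "S * cnj S = (\<Sum>x\<in>?I. \<Sum>y\<in>?I. e (\<phi> y - \<phi> x))"
    unfolding S_def by (simp add: sum_product cnj_sum mult.commute e_mult_cnj, subst sum.swap, rule refl)
  also have "\<dots> = (\<Sum>x\<in>?I. \<Sum>h\<in>?H. if x + h \<in> ?I then e (\<phi> (x + h) - \<phi> x) else 0)"
    using assms by (intro sum.cong refl sum_interval_by_shifts)
  also have "\<dots> = (\<Sum>h\<in>?H. \<Sum>x\<in>{x\<in>?I. x + h \<in> ?I}. e (\<phi> (x + h) - \<phi> x))"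
    by (subst sum.swap) (simp only: sum.inter_filter[OF finite_atLeastAtMost])
  also have "\<dots> = (\<Sum>h\<in>?H. \<Sum>x\<in>{max a (a-h)..min b (b-h)}. e (\<phi> (x + h) - \<phi> x))"
    by (intro sum.cong refl arg_cong[where f = "\<lambda>I. sum _ I"]) auto
  finally have eq: "S * cnj S = \<dots>" .
  have "(norm S)^2 = norm (S * cnj S)"
    by (simp add: norm_mult power2_eq_square)
  also have "\<dots> \<le> (\<Sum>h\<in>?H. norm (\<Sum>x\<in>{max a (a-h)..min b (b-h)}. e (\<phi> (x + h) - \<phi> x)))"
    unfolding eq by (rule norm_sum)
  finally show ?thesis unfolding S_def .
qed

lemma weyl_differencing:
  fixes F :: "int list \<Rightarrow> real" and \<phi> :: "int \<Rightarrow> real" and a b :: int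
  assumes "\<And>hs a' b'. hs \<in> shift_lists N j \<Longrightarrow> {a'..b'} \<subseteq> {1..int N} \<Longrightarrow>
              norm (\<Sum>x\<in>{a'..b'}. e (iter_diff hs \<phi> x)) \<le> F hs"
    and "{a..b} \<subseteq> {1..int N}"
  shows "(norm (\<Sum>x\<in>{a..b}. e (\<phi> x)))^(2^j)
          \<le> real (2*N+1) ^ (2^j - j - 1) * (\<Sum>hs\<in>shift_lists N j. F hs)"
  using assms
proof (induction j arbitrary: \<phi> F a b)
  case 0
  have "shift_lists N 0 = {[]}" unfolding shift_lists_def by auto
  thus ?case using "0.prems"(1)[of "[]" a b] "0.prems"(2) by simp
next
  case (Suc j)
  let ?H = "{- int N..int N}"
  let ?c = "real (2*N+1)"
  define g where "g h = norm (\<Sum>x\<in>{max a (a-h)..min b (b-h)}. e (\<phi> (x + h) - \<phi> x))" for h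
  have IH: "g h ^ (2^j) \<le> ?c ^ (2^j - j - 1) * (\<Sum>hs\<in>shift_lists N j. F (h # hs))"
    if h: "h \<in> ?H" for h
    unfolding g_def
  proof (rule Suc.IH)
    show "{max a (a-h)..min b (b-h)} \<subseteq> {1..int N}" using Suc.prems(2) by auto
    fix hs a' b' assume "hs \<in> shift_lists N j" "{a'..b'} \<subseteq> {1..int N}"
    moreover from this(1) h have "h # hs \<in> shift_lists N (Suc j)"
      unfolding shift_lists_def by auto
    ultimately show "norm (\<Sum>x\<in>{a'..b'}. e (iter_diff hs (\<lambda>x. \<phi> (x + h) - \<phi> x) x)) \<le> F (h # hs)"
      using Suc.prems(1)[of "h # hs" a' b'] by simp
  qed
  have "(norm (\<Sum>x\<in>{a..b}. e (\<phi> x)))^(2^Suc j) = ((norm (\<Sum>x\<in>{a..b}. e (\<phi> x)))^2)^(2^j)"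
    by (simp add: power_mult[symmetric] mult.commute)
  also have "\<dots> \<le> (\<Sum>h\<in>?H. g h)^(2^j)"
    unfolding g_def by (intro power_mono norm_sum_e_squared_le Suc.prems(2)) simp
  also have "\<dots> \<le> ?c ^ (2^j - 1) * (\<Sum>h\<in>?H. g h ^ (2^j))"
    using sum_power_two_pow_le[of ?H g j] by (simp add: g_def add.commute)
  also have "\<dots> \<le> ?c ^ (2^j - 1) * (\<Sum>h\<in>?H. ?c ^ (2^j - j - 1) * (\<Sum>hs\<in>shift_lists N j. F (h # hs)))"
    by (intro mult_left_mono sum_mono IH) auto
  also have "\<dots> = ?c ^ (2^j - 1) * ?c ^ (2^j - j - 1) * (\<Sum>hs\<in>shift_lists N (Suc j). F hs)"
    by (simp add: sum_shift_lists_Suc sum_distrib_left mult.assoc)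
  also have "?c ^ (2^j - 1) * ?c ^ (2^j - j - 1) = ?c ^ (2^Suc j - Suc j - 1)"
  proof -
    have "j < 2^j" by (rule less_exp)
    hence "(2^j - 1) + (2^j - j - 1) = (2::nat)^Suc j - Suc j - 1" by (simp only: power_Suc)
    thus ?thesis by (simp add: power_add[symmetric])
  qed
  finally show ?case .
qed

section \<open>Differencing polynomial phases\<close>

definition poly_deg_less :: "nat \<Rightarrow> (int \<Rightarrow> real) \<Rightarrow> bool" where
  "poly_deg_less d \<psi> \<longleftrightarrow> (\<exists>g. \<forall>x. \<psi> x = (\<Sum>m<d. g m * of_int x ^ m))"

definition poly_leading :: "nat \<Rightarrow> real \<Rightarrow> (int \<Rightarrow> real) \<Rightarrow> bool" where
  "poly_leading d c \<psi> \<longleftrightarrow> poly_deg_less d (\<lambda>x. \<psi> x - c * of_int x ^ d)"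

lemma poly_deg_lessI: "(\<And>x. \<psi> x = (\<Sum>m<d. g m * of_int x ^ m)) \<Longrightarrow> poly_deg_less d \<psi>"
  unfolding poly_deg_less_def by blast

lemma poly_deg_less_mono:
  assumes "poly_deg_less d \<psi>" "d \<le> d'"
  shows "poly_deg_less d' \<psi>"
proof -
  obtain g where g: "\<And>x. \<psi> x = (\<Sum>m<d. g m * of_int x ^ m)"
    using assms(1) unfolding poly_deg_less_def by blast
  have "\<psi> x = (\<Sum>m<d'. (if m < d then g m else 0) * of_int x ^ m)" for x
    unfolding g using assms(2) by (intro sum.mono_neutral_cong_left) auto
  thus ?thesis by (rule poly_deg_lessI)
qed

lemma poly_deg_less_add:
  assumes "poly_deg_less d \<psi>" "poly_deg_less d \<theta>"
  shows "poly_deg_less d (\<lambda>x. \<psi> x + \<theta> x)"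
proof -
  obtain g g' where g: "\<And>x. \<psi> x = (\<Sum>m<d. g m * of_int x ^ m)"
    and g': "\<And>x. \<theta> x = (\<Sum>m<d. g' m * of_int x ^ m)"
    using assms unfolding poly_deg_less_def by blast
  show ?thesis
    by (rule poly_deg_lessI[where g = "\<lambda>m. g m + g' m"]) (simp add: g g' sum.distrib algebra_simps)
qed

lemma poly_deg_less_cmult:
  assumes "poly_deg_less d \<psi>"
  shows "poly_deg_less d (\<lambda>x. c * \<psi> x)"
proof -
  obtain g where g: "\<And>x. \<psi> x = (\<Sum>m<d. g m * of_int x ^ m)"
    using assms unfolding poly_deg_less_def by blast
  show ?thesis
    by (rule poly_deg_lessI[where g = "\<lambda>m. c * g m"]) (simp add: g sum_distrib_left algebra_simps)
qed

lemma poly_deg_less_sum: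
  assumes "finite S" "\<And>i. i \<in> S \<Longrightarrow> poly_deg_less d (f i)"
  shows "poly_deg_less d (\<lambda>x. \<Sum>i\<in>S. f i x)"
  using assms
proof (induction S rule: finite_induct)
  case empty
  show ?case by (rule poly_deg_lessI[where g = "\<lambda>_. 0"]) simp
next
  case (insert i S)
  thus ?case by (simp add: poly_deg_less_add)
qed

lemma power_add_int_eq:
  "(of_int x + of_int h :: real) ^ m
     = (\<Sum>j<m. of_nat (m choose j) * of_int h ^ (m - j) * of_int x ^ j) + of_int x ^ m"
proof -
  have "(of_int x + of_int h :: real) ^ m = (\<Sum>j\<le>m. of_nat (m choose j) * of_int x ^ j * of_int h ^ (m - j))"
    by (rule binomial_ring)
  also have "\<dots> = (\<Sum>j<m. of_nat (m choose j) * of_int x ^ j * of_int h ^ (m - j)) + of_int x ^ m"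
    by (simp add: lessThan_Suc_atMost[symmetric])
  finally show ?thesis by (simp add: algebra_simps)
qed

lemma poly_deg_less_shift_power: "poly_deg_less m (\<lambda>x. (of_int x + of_int h) ^ m - of_int x ^ m)"
  by (rule poly_deg_lessI[where g = "\<lambda>j. of_nat (m choose j) * of_int h ^ (m - j)"])
    (simp add: power_add_int_eq)

lemma poly_leading_shift_power:
  assumes "d \<ge> 1"
  shows "poly_deg_less (d - 1) (\<lambda>x. of_int (x + h) ^ d - of_int x ^ d - of_nat d * of_int h * of_int x ^ (d - 1))"
proof -
  obtain d' where d: "d = Suc d'" using assms by (cases d) auto
  have "(of_int (x + h) :: real) ^ d - of_int x ^ d - of_nat d * of_int h * of_int x ^ (d - 1)
      = (\<Sum>j<d'. of_nat (d choose j) * of_int h ^ (d - j) * of_int x ^ j)" for x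
    using power_add_int_eq[of x h d] unfolding d by (simp add: algebra_simps)
  thus ?thesis unfolding d by (intro poly_deg_lessI) simp
qed

lemma poly_deg_less_diff:
  assumes "poly_deg_less d \<psi>"
  shows "poly_deg_less (d - 1) (\<lambda>x. \<psi> (x + h) - \<psi> x)"
proof -
  obtain g where g: "\<And>x. \<psi> x = (\<Sum>m<d. g m * of_int x ^ m)"
    using assms unfolding poly_deg_less_def by blast
  have eq: "(\<lambda>x. \<psi> (x + h) - \<psi> x) = (\<lambda>x. \<Sum>m<d. g m * (of_int (x + h) ^ m - of_int x ^ m))"
    by (simp add: g sum_subtractf[symmetric] algebra_simps)
  show ?thesis unfolding eq
    by (intro poly_deg_less_sum poly_deg_less_cmult) (auto intro: poly_deg_less_mono[OF poly_deg_less_shift_power])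
qed

lemma poly_leading_diff:
  assumes "poly_leading d c \<psi>" "d \<ge> 1"
  shows "poly_leading (d - 1) (c * of_nat d * of_int h) (\<lambda>x. \<psi> (x + h) - \<psi> x)"
proof -
  define L where "L x = \<psi> x - c * of_int x ^ d" for x
  have L: "poly_deg_less d L" using assms(1) unfolding poly_leading_def L_def .
  have eq: "(\<lambda>x. \<psi> (x + h) - \<psi> x - c * of_nat d * of_int h * of_int x ^ (d - 1)) =
      (\<lambda>x. c * (of_int (x + h) ^ d - of_int x ^ d - of_nat d * of_int h * of_int x ^ (d - 1))
         + (L (x + h) - L x))"
    by (simp add: L_def algebra_simps)
  show ?thesis unfolding poly_leading_def eq
    by (intro poly_deg_less_add poly_deg_less_cmult poly_leading_shift_power poly_deg_less_diff L assms(2))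
qed

lemma poly_leading_iter_diff:
  assumes "poly_leading d c \<psi>" "length hs \<le> d"
  shows "poly_leading (d - length hs)
           (c * (\<Prod>i<length hs. real (d - i)) * of_int (prod_list hs)) (iter_diff hs \<psi>)"
  using assms
proof (induction hs arbitrary: d c \<psi>)
  case Nil thus ?case by simp
next
  case (Cons h hs)
  have "poly_leading (d - 1) (c * of_nat d * of_int h) (\<lambda>x. \<psi> (x + h) - \<psi> x)"
    using Cons.prems by (intro poly_leading_diff) auto
  from Cons.IH[OF this] Cons.prems(2)
  have "poly_leading (d - 1 - length hs)
     (c * of_nat d * of_int h * (\<Prod>i<length hs. real (d - 1 - i)) * of_int (prod_list hs))
     (iter_diff hs (\<lambda>x. \<psi> (x + h) - \<psi> x))" by simp
  moreover have "(\<Prod>i<length (h # hs). real (d - i)) = of_nat d * (\<Prod>i<length hs. real (d - 1 - i))"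
    by (simp only: length_Cons prod.lessThan_Suc_shift) simp
  ultimately show ?case by (simp add: algebra_simps)
qed

lemma poly_leading_1_eq:
  assumes "poly_leading 1 c \<psi>"
  shows "\<psi> x = c * of_int x + \<psi> 0"
proof -
  obtain g where "\<And>x. \<psi> x - c * of_int x ^ 1 = (\<Sum>m<1. g m * of_int x ^ m)"
    using assms unfolding poly_leading_def poly_deg_less_def by blast
  from this[of x] this[of 0] show ?thesis by simp
qed

lemma poly_leading_monomial: "poly_leading d c (\<lambda>x. c * of_int x ^ d)"
  unfolding poly_leading_def by (rule poly_deg_lessI[where g = "\<lambda>_. 0"]) simp

lemma prod_lessThan_pred_eq_fact: "(\<Prod>i<k - 1. real (k - i)) = fact k"
proof (cases k)
  case (Suc m)
  have "fact k = (\<Prod>i<Suc m. real (Suc m - i))"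
    unfolding Suc fact_prod_rev by (simp add: atLeast0LessThan)
  thus ?thesis unfolding Suc by (simp add: prod.lessThan_Suc)
qed simp

lemma norm_sum_e_monomial_pow_le:
  assumes "k \<ge> 1"
  shows "(norm (\<Sum>x\<in>{1..int N}. e (\<beta> * of_int x ^ k)))^(2^(k-1))
     \<le> real (2*N+1) ^ (2^(k-1) - k) *
        (\<Sum>hs\<in>shift_lists N (k-1). lin_bound N (\<beta> * fact k * of_int (prod_list hs)))"
proof -
  have "(norm (\<Sum>x\<in>{1..int N}. e (\<beta> * of_int x ^ k)))^(2^(k-1))
     \<le> real (2*N+1) ^ (2^(k-1) - (k-1) - 1) *
        (\<Sum>hs\<in>shift_lists N (k-1). lin_bound N (\<beta> * fact k * of_int (prod_list hs)))"
  proof (rule weyl_differencing)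
    fix hs a' b' assume hs: "hs \<in> shift_lists N (k-1)" and ab: "{a'..b'} \<subseteq> {1..int N}"
    have len: "length hs = k - 1" using hs unfolding shift_lists_def by auto
    have "poly_leading (k - length hs) (\<beta> * (\<Prod>i<length hs. real (k - i)) * of_int (prod_list hs))
        (iter_diff hs (\<lambda>x. \<beta> * of_int x ^ k))"
      using len by (intro poly_leading_iter_diff poly_leading_monomial) auto
    moreover have "k - length hs = 1" "(\<Prod>i<length hs. real (k - i)) = fact k"
      using len assms prod_lessThan_pred_eq_fact[of k] by auto
    ultimately have lin: "poly_leading 1 (\<beta> * fact k * of_int (prod_list hs)) (iter_diff hs (\<lambda>x. \<beta> * of_int x ^ k))"
      by simp
    show "norm (\<Sum>x\<in>{a'..b'}. e (iter_diff hs (\<lambda>x. \<beta> * of_int x ^ k) x))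
        \<le> lin_bound N (\<beta> * fact k * of_int (prod_list hs))"
      by (subst poly_leading_1_eq[OF lin]) (rule norm_sum_e_linear_le_lin_bound[OF ab])
  qed simp
  moreover have "2^(k-1) - (k-1) - 1 = 2^(k-1) - k" using assms by simp
  ultimately show ?thesis by simp
qed

section \<open>The divisor bound\<close>

definition divisor_count :: "nat \<Rightarrow> nat" where
  "divisor_count n = card {d. d dvd n}"

lemma div_gcd_dvd_of_dvd_mult:
  fixes d a b :: nat
  assumes "d dvd a * b" "a > 0"
  shows "d div gcd d a dvd b"
proof -
  define g where "g = gcd d a"
  obtain d1 a1 where d1: "d = g * d1" and a1: "a = g * a1"
    unfolding g_def by (metis gcd_dvd1 gcd_dvd2 dvdE)
  have g_pos: "g > 0" using assms unfolding g_def by simp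
  have quot: "d div g = d1" "a div g = a1" using d1 a1 g_pos by auto
  have "coprime (d div g) (a div g)"
    unfolding g_def using assms by (intro div_gcd_coprime) auto
  hence "coprime d1 a1" unfolding quot .
  moreover have "d1 dvd a1 * b" using assms(1) d1 a1 g_pos by (simp add: mult.assoc)
  ultimately have "d1 dvd b" by (simp add: coprime_dvd_mult_right_iff)
  thus ?thesis using quot(1) unfolding g_def by simp
qed

lemma divisor_count_mult_le:
  fixes a b :: nat
  assumes "a > 0" "b > 0"
  shows "divisor_count (a * b) \<le> divisor_count a * divisor_count b"
proof -
  let ?f = "\<lambda>d. (gcd d a, d div gcd d a)"
  have "inj_on ?f {d. d dvd a * b}"
  proof (rule inj_onI)
    fix x y assume "?f x = ?f y"
    moreover have "x = gcd x a * (x div gcd x a)" "y = gcd y a * (y div gcd y a)" by simp_all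
    ultimately show "x = y" by (metis prod.inject)
  qed
  moreover have "?f ` {d. d dvd a * b} \<subseteq> {d. d dvd a} \<times> {d. d dvd b}"
    using div_gcd_dvd_of_dvd_mult assms by auto
  moreover have "finite ({d. d dvd a} \<times> {d. d dvd b})" using assms by auto
  ultimately have "card {d. d dvd a * b} \<le> card ({d. d dvd a} \<times> {d. d dvd b})"
    by (rule card_inj_on_le)
  thus ?thesis unfolding divisor_count_def by (simp add: card_cartesian_product)
qed

lemma divisor_count_prime_power_le:
  assumes "prime (p::nat)"
  shows "divisor_count (p ^ j) \<le> j + 1"
proof -
  have "{d. d dvd p ^ j} \<subseteq> (\<lambda>i. p ^ i) ` {..j}"
    using divides_primepow_nat[OF assms] by auto
  hence "card {d. d dvd p ^ j} \<le> card ((\<lambda>i. p ^ i) ` {..j})" by (intro card_mono) auto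
  also have "\<dots> \<le> card {..j}" by (rule card_image_le) simp
  finally show ?thesis unfolding divisor_count_def by simp
qed

lemma divisor_count_le_prod_prime_factors:
  fixes w :: "nat \<Rightarrow> real"
  assumes w: "\<And>p j. prime p \<Longrightarrow> real j + 1 \<le> w p * real p powr (real j * \<epsilon>)"
    and "n \<ge> 1"
  shows "real (divisor_count n) \<le> (\<Prod>p\<in>prime_factors n. w p) * real n powr \<epsilon>"
  using \<open>n \<ge> 1\<close>
proof (induction n rule: less_induct)
  case (less n)
  show ?case
  proof (cases "n = 1")
    case True
    thus ?thesis by (simp add: divisor_count_def)
  next
    case False
    then obtain p where p: "prime p" "p dvd n" using prime_factor_nat by blast
    have n0: "n \<noteq> 0" using less.prems by simp
    define j where "j = multiplicity p n"
    obtain y where n_eq: "n = p ^ j * y" and "\<not> p dvd y"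
      using multiplicity_decompose'[OF n0] p(1) unfolding j_def by (metis not_prime_unit)
    have "j \<noteq> 0" using n_eq \<open>\<not> p dvd y\<close> p(2) by (auto intro: Nat.gr0I)
    have p2: "p \<ge> 2" using p(1) by (simp add: prime_ge_2_nat)
    have y1: "y \<ge> 1" using n_eq n0 by (cases y) auto
    have "p ^ 1 \<le> p ^ j" using p2 \<open>j \<noteq> 0\<close> by (intro power_increasing) auto
    hence "2 * y \<le> p ^ j * y" using p2 by (intro mult_right_mono) auto
    hence "y < n" using n_eq y1 by linarith
    have factors: "prime_factors n = insert p (prime_factors y)" and "p \<notin> prime_factors y"
      using n_eq n0 y1 p(1) \<open>j \<noteq> 0\<close> \<open>\<not> p dvd y\<close>
      by (auto simp: prime_factors_dvd prime_dvd_mult_iff prime_dvd_power_iff dest: primes_dvd_imp_eq)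
    have "divisor_count n \<le> divisor_count (p ^ j) * divisor_count y"
      unfolding n_eq using p2 y1 by (intro divisor_count_mult_le) auto
    also have "\<dots> \<le> (j + 1) * divisor_count y"
      by (intro mult_right_mono divisor_count_prime_power_le p(1)) simp
    finally have "real (divisor_count n) \<le> real ((j + 1) * divisor_count y)" by (rule of_nat_mono)
    hence "real (divisor_count n) \<le> (real j + 1) * real (divisor_count y)" by (simp add: algebra_simps)
    also have "\<dots> \<le> (w p * real p powr (real j * \<epsilon>)) * ((\<Prod>q\<in>prime_factors y. w q) * real y powr \<epsilon>)"
      using w[OF p(1), of j] less.IH[OF \<open>y < n\<close> y1] by (intro mult_mono) auto
    also have "\<dots> = (\<Prod>q\<in>prime_factors n. w q) * real n powr \<epsilon>"
    proof -
      have "(\<Prod>q\<in>prime_factors n. w q) = w p * (\<Prod>q\<in>prime_factors y. w q)"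
        unfolding factors using \<open>p \<notin> prime_factors y\<close> by simp
      moreover have "real n powr \<epsilon> = real p powr (real j * \<epsilon>) * real y powr \<epsilon>"
        unfolding n_eq using p2 by (simp add: powr_mult powr_realpow[symmetric] powr_powr mult.commute)
      ultimately show ?thesis by (simp add: mult_ac)
    qed
    finally show ?thesis .
  qed
qed

lemma Suc_le_const_mult_two_powr:
  fixes \<epsilon> :: real
  assumes "\<epsilon> > 0"
  shows "real j + 1 \<le> (1 + 1 / (\<epsilon> * ln 2)) * 2 powr (real j * \<epsilon>)"
proof -
  have ln2: "ln (2::real) > 0" by simp
  have "real j + 1 \<le> 1 + real j * \<epsilon> * ln 2 + 1 / (\<epsilon> * ln 2) + real j"
    using assms ln2 by simp
  also have "\<dots> = (1 + 1 / (\<epsilon> * ln 2)) * (1 + real j * \<epsilon> * ln 2)"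
    using assms ln2 by (simp add: field_simps)
  also have "1 + real j * \<epsilon> * ln 2 \<le> exp (real j * \<epsilon> * ln 2)"
    by (rule exp_ge_add_one_self)
  also have "exp (real j * \<epsilon> * ln 2) = 2 powr (real j * \<epsilon>)"
    by (simp add: powr_def)
  finally show ?thesis using assms ln2 by (simp add: mult_left_mono)
qed

lemma divisor_count_le_powr:
  fixes \<epsilon> :: real
  assumes "\<epsilon> > 0"
  shows "\<exists>C>0. \<forall>n::nat. n \<ge> 1 \<longrightarrow> real (divisor_count n) \<le> C * real n powr \<epsilon>"
proof -
  define T :: real where "T = 2 powr (1 / \<epsilon>)"
  define c :: real where "c = 1 + 1 / (\<epsilon> * ln 2)"
  have c1: "c \<ge> 1" unfolding c_def using assms by simp
  define w where "w p = (if real p < T then c else 1)" for p :: nat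
  \<comment> \<open>Only the primes below \<open>T\<close> lose a constant; for the others \<open>j + 1 \<le> 2 ^ j \<le> p powr (j \<epsilon>)\<close>.\<close>
  have w: "real j + 1 \<le> w p * real p powr (real j * \<epsilon>)" if "prime p" for p j :: nat
  proof (cases "real p < T")
    case True
    have "real j + 1 \<le> c * 2 powr (real j * \<epsilon>)"
      unfolding c_def by (rule Suc_le_const_mult_two_powr[OF assms])
    also have "\<dots> \<le> c * real p powr (real j * \<epsilon>)"
      using prime_ge_2_nat[OF that] c1 assms by (intro mult_left_mono powr_mono2) auto
    finally show ?thesis using True unfolding w_def by simp
  next
    case False
    have "real j + 1 \<le> 2 ^ j" by (induction j) auto
    also have "(2::real) ^ j = T powr (real j * \<epsilon>)"
      unfolding T_def using assms by (simp add: powr_powr powr_realpow)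
    also have "\<dots> \<le> real p powr (real j * \<epsilon>)"
      using False assms by (intro powr_mono2) (auto simp: T_def)
    finally show ?thesis using False unfolding w_def by simp
  qed
  have "real (divisor_count n) \<le> c ^ nat \<lceil>T\<rceil> * real n powr \<epsilon>" if "n \<ge> 1" for n
  proof -
    have "prime_factors n \<inter> {p. real p < T} \<subseteq> {..<nat \<lceil>T\<rceil>}" by auto linarith
    hence "card (prime_factors n \<inter> {p. real p < T}) \<le> nat \<lceil>T\<rceil>"
      using card_mono[of "{..<nat \<lceil>T\<rceil>}"] by fastforce
    hence "(\<Prod>p\<in>prime_factors n. w p) \<le> c ^ nat \<lceil>T\<rceil>"
      unfolding w_def prod.If_cases[OF finite_set_mset] using c1 by (simp add: power_increasing)
    hence "(\<Prod>p\<in>prime_factors n. w p) * real n powr \<epsilon> \<le> c ^ nat \<lceil>T\<rceil> * real n powr \<epsilon>"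
      by (rule mult_right_mono) simp
    with divisor_count_le_prod_prime_factors[OF w that] show ?thesis by linarith
  qed
  moreover have "c ^ nat \<lceil>T\<rceil> > 0" using c1 by simp
  ultimately show ?thesis by (intro exI[of _ "c ^ nat \<lceil>T\<rceil>"]) simp
qed

section \<open>Sums of \<open>min(N, 1/\<parallel>n\<alpha>\<parallel>)\<close> over an interval\<close>

definition residue_dist :: "nat \<Rightarrow> int \<Rightarrow> int" where
  "residue_dist q v = min v (int q - 1 - v)"

lemma dist_to_int_div_ge:
  fixes y :: real and q :: nat
  assumes "q \<ge> 1"
  shows "dist_to_int (y / real q) \<ge> real_of_int (residue_dist q (\<lfloor>y\<rfloor> mod int q)) / real q"
proof -
  define m where "m = round (y / real q)"
  define s where "s = \<lfloor>y\<rfloor> mod int q"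
  define M where "M = \<lfloor>y\<rfloor> div int q"
  have y_eq: "\<lfloor>y\<rfloor> = int q * M + s" unfolding s_def M_def by simp
  have s: "0 \<le> s" "s < int q" unfolding s_def using assms by auto
  have y_floor: "real_of_int \<lfloor>y\<rfloor> \<le> y" "y < real_of_int \<lfloor>y\<rfloor> + 1" by linarith+
  have q_pos: "real q > 0" using assms by simp
  have "\<bar>y - real q * real_of_int m\<bar> \<ge> real_of_int (residue_dist q s)"
  proof (cases "m \<le> M")
    case True
    hence "real_of_int (int q * m) \<le> real_of_int (int q * M)"
      by (simp only: of_int_le_iff) (intro mult_left_mono, auto)
    hence "y - real q * real_of_int m \<ge> real_of_int s" using y_eq y_floor by (simp add: algebra_simps)
    thus ?thesis unfolding residue_dist_def by linarith
  next
    case False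
    hence "real_of_int (int q * m) \<ge> real_of_int (int q * (M + 1))"
      by (simp only: of_int_le_iff) (intro mult_left_mono, auto)
    hence "real q * real_of_int m - y > real_of_int (int q - 1 - s)" using y_eq y_floor by (simp add: algebra_simps)
    thus ?thesis unfolding residue_dist_def by linarith
  qed
  moreover have "dist_to_int (y / real q) = \<bar>y - real q * real_of_int m\<bar> / real q"
    unfolding dist_to_int_def m_def using q_pos by (simp add: field_simps abs_divide)
  ultimately show ?thesis using q_pos unfolding s_def by (simp add: divide_right_mono)
qed

lemma residue_dist_shift:
  fixes z e :: int and q :: nat
  assumes "q \<ge> 1" "\<bar>e\<bar> \<le> 1"
  shows "residue_dist q (z mod int q) \<ge> residue_dist q ((z - e) mod int q) - 1"
proof -
  define t where "t = (z - e) mod int q"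
  have t: "0 \<le> t" "t < int q" unfolding t_def using assms by auto
  have z_mod: "z mod int q = (t + e) mod int q" unfolding t_def by (simp add: mod_add_left_eq)
  consider "e = 0" | "e = 1" | "e = -1" using assms(2) by linarith
  thus ?thesis
  proof cases
    case 1 thus ?thesis unfolding z_mod t_def by simp
  next
    case 2
    show ?thesis
    proof (cases "t = int q - 1")
      case True
      hence "(t + e) mod int q = 0" using 2 by simp
      thus ?thesis unfolding z_mod t_def[symmetric] using True assms(1) by (simp add: residue_dist_def)
    next
      case False
      hence "(t + e) mod int q = t + 1" unfolding 2 using t by (intro mod_pos_pos_trivial) auto
      thus ?thesis unfolding z_mod t_def[symmetric] using assms(1) t by (simp add: residue_dist_def min_def)
    qed
  next
    case 3
    show ?thesis
    proof (cases "t = 0")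
      case True
      hence "(t + e) mod int q = int q - 1" using 3 assms(1) by (simp add: zmod_minus1)
      thus ?thesis unfolding z_mod t_def[symmetric] using True assms(1) by (simp add: residue_dist_def)
    next
      case False
      hence "(t + e) mod int q = t - 1" unfolding 3 using t mod_pos_pos_trivial[of "t - 1" "int q"] by simp
      thus ?thesis unfolding z_mod t_def[symmetric] using assms(1) t by (simp add: residue_dist_def min_def)
    qed
  qed
qed

lemma card_residue_dist_less_two: "card {t\<in>{0..<int q}. residue_dist q t < 2} \<le> 4"
proof -
  have "card {t\<in>{0..<int q}. residue_dist q t < 2} \<le> card {0, 1, int q - 2, int q - 1}"
    by (intro card_mono) (auto simp: residue_dist_def)
  also have "\<dots> \<le> 4" using card_length[of "[0, 1, int q - 2, int q - 1]"] by simp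
  finally show ?thesis .
qed

lemma sum_inverse_pred_le:
  assumes "q \<ge> 1"
  shows "(\<Sum>t\<in>{0..<int q}. if t \<ge> 2 then 1 / real_of_int (t - 1) else 0) \<le> 1 + ln (real q)"
proof -
  have "(\<Sum>t\<in>{0..<int q}. if t \<ge> 2 then 1 / real_of_int (t - 1) else 0)
      = (\<Sum>t\<in>{2..<int q}. 1 / real_of_int (t - 1))"
    by (rule sum.mono_neutral_cong_right) auto
  also have "\<dots> = (\<Sum>i\<in>{1..<int q - 1}. 1 / real_of_int i)"
    by (rule sum.reindex_bij_witness[of _ "\<lambda>i. i + 1" "\<lambda>t. t - 1"]) auto
  also have "\<dots> \<le> (\<Sum>i\<in>{1..int q}. 1 / real_of_int i)"
    by (intro sum_mono2) auto
  also have "\<dots> = harm q"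
  proof -
    have "{1..int q} = int ` {1..q}" by (simp add: image_int_atLeastAtMost)
    thus ?thesis unfolding harm_def by (simp add: sum.reindex inverse_eq_divide)
  qed
  also have "\<dots> \<le> 1 + ln (real q)"
    using euler_mascheroni_sequence_decreasing[of 1 q] assms by (simp add: harm_def)
  finally show ?thesis .
qed

definition residue_bound :: "nat \<Rightarrow> nat \<Rightarrow> int \<Rightarrow> real" where
  "residue_bound N q t =
     (if residue_dist q t \<ge> 2 then 2 * real q / real_of_int (residue_dist q t - 1) else real N)"

lemma sum_residue_bound_le:
  assumes "q \<ge> 1"
  shows "(\<Sum>t\<in>{0..<int q}. residue_bound N q t) \<le> 4 * real N + 4 * real q * (1 + ln (real q))"
proof -
  define h where "h t = (if t \<ge> 2 then 1 / real_of_int (t - 1) else 0)" for t :: int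
  define small where "small t = (if residue_dist q t < 2 then 1 else 0 :: real)" for t
  \<comment> \<open>Residues near \<open>0\<close> are charged to \<open>h t\<close>, residues near \<open>q\<close> to \<open>h (q - 1 - t)\<close>.\<close>
  have pointwise: "residue_bound N q t \<le> real N * small t + 2 * real q * (h t + h (int q - 1 - t))" for t
  proof (cases "residue_dist q t \<ge> 2")
    case True
    hence "1 / real_of_int (residue_dist q t - 1) \<le> h t + h (int q - 1 - t)"
      unfolding h_def residue_dist_def by (auto simp: min_def)
    hence "2 * real q * (1 / real_of_int (residue_dist q t - 1)) \<le> 2 * real q * (h t + h (int q - 1 - t))"
      by (intro mult_left_mono) auto
    thus ?thesis using True unfolding residue_bound_def small_def by simp
  next
    case False
    thus ?thesis unfolding residue_bound_def small_def h_def by simp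
  qed
  have "(\<Sum>t\<in>{0..<int q}. small t) \<le> 4"
  proof -
    have "{0..<int q} \<inter> {t. residue_dist q t < 2} = {t\<in>{0..<int q}. residue_dist q t < 2}" by blast
    thus ?thesis using card_residue_dist_less_two[of q] by (simp add: small_def sum.If_cases)
  qed
  moreover have "(\<Sum>t\<in>{0..<int q}. h (int q - 1 - t)) = (\<Sum>t\<in>{0..<int q}. h t)"
    by (rule sum.reindex_bij_witness[of _ "\<lambda>t. int q - 1 - t" "\<lambda>t. int q - 1 - t"]) auto
  moreover have "(\<Sum>t\<in>{0..<int q}. h t) \<le> 1 + ln (real q)"
    unfolding h_def by (rule sum_inverse_pred_le[OF assms])
  ultimately have "real N * (\<Sum>t\<in>{0..<int q}. small t)
        + 2 * real q * ((\<Sum>t\<in>{0..<int q}. h t) + (\<Sum>t\<in>{0..<int q}. h (int q - 1 - t)))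
      \<le> real N * 4 + 2 * real q * ((1 + ln (real q)) + (1 + ln (real q)))"
    by (intro add_mono mult_left_mono) auto
  moreover have "(\<Sum>t\<in>{0..<int q}. residue_bound N q t)
      \<le> real N * (\<Sum>t\<in>{0..<int q}. small t)
        + 2 * real q * ((\<Sum>t\<in>{0..<int q}. h t) + (\<Sum>t\<in>{0..<int q}. h (int q - 1 - t)))"
    using sum_mono[OF pointwise] by (simp add: sum.distrib sum_distrib_left distrib_left)
  ultimately show ?thesis by (simp add: algebra_simps)
qed

lemma lin_bound_le_residue_bound:
  fixes \<alpha> :: real and r n0 :: int and q j :: nat
  assumes q1: "q \<ge> 1" and j: "j < q"
    and app: "\<bar>\<alpha> - real_of_int r / real q\<bar> \<le> 1 / (real q)^2"
  shows "lin_bound N ((real_of_int n0 + real j) * \<alpha>)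
           \<le> residue_bound N q ((\<lfloor>real q * (real_of_int n0 * \<alpha>)\<rfloor> + int j * r) mod int q)"
proof -
  have q_pos: "real q > 0" using q1 by simp
  define a where "a = real q * (real_of_int n0 * \<alpha>)"
  define t where "t = (\<lfloor>a\<rfloor> + int j * r) mod int q"
  define \<eta> where "\<eta> = real q * real j * (\<alpha> - real_of_int r / real q)"
  \<comment> \<open>\<open>q (n0 + j) \<alpha> = a + j r + \<eta>\<close> with \<open>|\<eta>| \<le> j/q < 1\<close>, so its floor is \<open>\<lfloor>a\<rfloor> + j r\<close> up to \<open>\<plusminus>1\<close>.\<close>
  have "\<bar>\<eta>\<bar> \<le> real q * real j * (1 / (real q)^2)"
    unfolding \<eta>_def using mult_left_mono[OF app, of "real q * real j"] by (simp add: abs_mult)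
  also have "\<dots> < 1" using j q_pos by (simp add: field_simps power2_eq_square)
  finally have \<eta>: "\<bar>\<eta>\<bar> < 1" .
  define y where "y = real q * ((real_of_int n0 + real j) * \<alpha>)"
  have "y = (a + \<eta>) + real_of_int (int j * r)"
    unfolding y_def a_def \<eta>_def using q_pos by (simp add: field_simps)
  hence floor_y: "\<lfloor>y\<rfloor> = \<lfloor>a + \<eta>\<rfloor> + int j * r" by (simp only: floor_add_int)
  have "\<lfloor>a - 1\<rfloor> \<le> \<lfloor>a + \<eta>\<rfloor>" "\<lfloor>a + \<eta>\<rfloor> \<le> \<lfloor>a + 1\<rfloor>"
    using \<eta> by (intro floor_mono, linarith)+
  hence "\<bar>\<lfloor>a + \<eta>\<rfloor> - \<lfloor>a\<rfloor>\<bar> \<le> 1" by simp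
  from residue_dist_shift[OF q1 this, of "\<lfloor>y\<rfloor>"]
  have "residue_dist q (\<lfloor>y\<rfloor> mod int q) \<ge> residue_dist q t - 1"
    unfolding floor_y t_def by (simp add: add.commute)
  moreover have "y / real q = (real_of_int n0 + real j) * \<alpha>" unfolding y_def using q_pos by simp
  ultimately have dist: "dist_to_int ((real_of_int n0 + real j) * \<alpha>) \<ge> real_of_int (residue_dist q t - 1) / real q"
    using dist_to_int_div_ge[OF q1, of y] q_pos
    by (smt (verit, best) divide_right_mono of_int_le_iff)
  show ?thesis
  proof (cases "residue_dist q t \<ge> 2")
    case True
    have pos: "real_of_int (residue_dist q t - 1) / real q > 0" using True q_pos by simp
    hence "lin_bound N ((real_of_int n0 + real j) * \<alpha>) \<le> 2 / dist_to_int ((real_of_int n0 + real j) * \<alpha>)"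
      using dist unfolding lin_bound_def by simp
    also have "\<dots> \<le> 2 / (real_of_int (residue_dist q t - 1) / real q)"
      using dist pos by (intro divide_left_mono mult_pos_pos) auto
    finally show ?thesis using True q_pos unfolding residue_bound_def t_def a_def by simp
  next
    case False
    thus ?thesis unfolding residue_bound_def t_def a_def using lin_bound_le by simp
  qed
qed

lemma inj_on_affine_mod:
  fixes c r :: int
  assumes "coprime r (int q)"
  shows "inj_on (\<lambda>j. (c + int j * r) mod int q) {..<q}"
proof (rule inj_onI)
  fix i j assume i: "i \<in> {..<q}" and j: "j \<in> {..<q}"
    and "(c + int i * r) mod int q = (c + int j * r) mod int q"
  hence "int q dvd (int i - int j) * r" by (simp add: mod_eq_dvd_iff algebra_simps)
  hence "int q dvd (int i - int j)"
    using assms by (simp add: coprime_dvd_mult_left_iff coprime_commute)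
  with i j show "i = j" using dvd_imp_le_int[of "int i - int j" "int q"] by fastforce
qed

lemma sum_lin_bound_block_le:
  fixes \<alpha> :: real and r n0 :: int and q :: nat
  assumes q1: "q \<ge> 1" and cop: "coprime r (int q)"
    and app: "\<bar>\<alpha> - real_of_int r / real q\<bar> \<le> 1 / (real q)^2"
  shows "(\<Sum>j<q. lin_bound N ((real_of_int n0 + real j) * \<alpha>))
           \<le> 4 * real N + 4 * real q * (1 + ln (real q))"
proof -
  define t where "t j = (\<lfloor>real q * (real_of_int n0 * \<alpha>)\<rfloor> + int j * r) mod int q" for j :: nat
  have "(\<Sum>j<q. lin_bound N ((real_of_int n0 + real j) * \<alpha>)) \<le> (\<Sum>j<q. residue_bound N q (t j))"
    unfolding t_def by (intro sum_mono lin_bound_le_residue_bound[OF q1 _ app]) auto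
  also have "\<dots> = (\<Sum>u\<in>t ` {..<q}. residue_bound N q u)"
    unfolding t_def by (simp add: sum.reindex[OF inj_on_affine_mod[OF cop]])
  also have "\<dots> \<le> (\<Sum>u\<in>{0..<int q}. residue_bound N q u)"
    using q1 by (intro sum_mono2) (auto simp: t_def residue_bound_def)
  also have "\<dots> \<le> 4 * real N + 4 * real q * (1 + ln (real q))"
    by (rule sum_residue_bound_le[OF q1])
  finally show ?thesis .
qed

lemma sum_lin_bound_multiples_le:
  fixes \<alpha> :: real and r :: int and q X :: nat
  assumes q1: "q \<ge> 1" and cop: "coprime r (int q)"
    and app: "\<bar>\<alpha> - real_of_int r / real q\<bar> \<le> 1 / (real q)^2"
  shows "(\<Sum>n\<in>{1..X}. lin_bound N (real n * \<alpha>))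
           \<le> (real X / real q + 1) * (4 * real N + 4 * real q * (1 + ln (real q)))"
proof -
  define \<beta> where "\<beta> = 4 * real N + 4 * real q * (1 + ln (real q))"
  have blocks: "(\<Sum>n\<in>{1..T*q}. lin_bound N (real n * \<alpha>)) \<le> real T * \<beta>" for T
  proof (induction T)
    case 0 thus ?case by simp
  next
    case (Suc T)
    have "(\<Sum>n\<in>{T*q+1..T*q+q}. lin_bound N (real n * \<alpha>))
        = (\<Sum>j<q. lin_bound N ((real_of_int (int (T*q+1)) + real j) * \<alpha>))"
      by (rule sum.reindex_bij_witness[of _ "\<lambda>j. T*q+1+j" "\<lambda>n. n - (T*q+1)"]) (auto simp: algebra_simps)
    also have "\<dots> \<le> \<beta>" unfolding \<beta>_def by (rule sum_lin_bound_block_le[OF q1 cop app])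
    finally have "(\<Sum>n\<in>{T*q+1..T*q+q}. lin_bound N (real n * \<alpha>)) \<le> \<beta>" .
    moreover have "{1..Suc T * q} = {1..T*q} \<union> {T*q+1..T*q+q}" by auto
    hence "(\<Sum>n\<in>{1..Suc T * q}. lin_bound N (real n * \<alpha>)) =
        (\<Sum>n\<in>{1..T*q}. lin_bound N (real n * \<alpha>)) + (\<Sum>n\<in>{T*q+1..T*q+q}. lin_bound N (real n * \<alpha>))"
      by (simp add: sum.union_disjoint)
    ultimately show ?case using Suc.IH by (simp add: algebra_simps)
  qed
  define T where "T = X div q + 1"
  have "X \<le> T * q" unfolding T_def using q1 by (simp add: dividend_less_div_times less_imp_le)
  hence "(\<Sum>n\<in>{1..X}. lin_bound N (real n * \<alpha>)) \<le> (\<Sum>n\<in>{1..T*q}. lin_bound N (real n * \<alpha>))"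
    by (intro sum_mono2) (auto simp: lin_bound_nonneg)
  also have "\<dots> \<le> real T * \<beta>" by (rule blocks)
  also have "\<dots> \<le> (real X / real q + 1) * \<beta>"
  proof -
    have "real (X div q) * real q \<le> real X" by (metis of_nat_le_iff of_nat_mult div_times_less_eq_dividend)
    hence "real T \<le> real X / real q + 1" unfolding T_def using q1 by (simp add: field_simps)
    thus ?thesis unfolding \<beta>_def using q1 by (intro mult_right_mono) auto
  qed
  finally show ?thesis unfolding \<beta>_def .
qed

section \<open>Counting the differenced frequencies\<close>

lemma int_abs_range_eq:
  "{x::int. 1 \<le> \<bar>x\<bar> \<and> real_of_int \<bar>x\<bar> \<le> B} = {1..\<lfloor>B\<rfloor>} \<union> uminus ` {1..\<lfloor>B\<rfloor>}"
proof -
  have "real_of_int \<bar>x\<bar> \<le> B \<longleftrightarrow> \<bar>x\<bar> \<le> \<lfloor>B\<rfloor>" for x by (simp add: le_floor_iff)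
  moreover have "x \<in> uminus ` {1..\<lfloor>B\<rfloor>}" if "x \<le> -1" "-x \<le> \<lfloor>B\<rfloor>" for x
    using that by (intro image_eqI[of _ _ "-x"]) auto
  ultimately show ?thesis by (auto simp: abs_if)
qed

lemma norm_weyl_f_le:
  assumes "B \<ge> 1"
  shows "norm (weyl_f k B \<beta>) \<le> 2 * norm (\<Sum>x\<in>{1..int (nat \<lfloor>B\<rfloor>)}. e (\<beta> * of_int x ^ k))"
proof -
  define S where "S = (\<Sum>x\<in>{1..\<lfloor>B\<rfloor>}. e (\<beta> * of_int x ^ k))"
  define S' where "S' = (\<Sum>x\<in>{1..\<lfloor>B\<rfloor>}. e (\<beta> * of_int (- x) ^ k))"
  have "weyl_f k B \<beta> = S + (\<Sum>x\<in>uminus ` {1..\<lfloor>B\<rfloor>}. e (\<beta> * of_int x ^ k))"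
    unfolding weyl_f_def int_abs_range_eq S_def by (rule sum.union_disjoint) auto
  also have "(\<Sum>x\<in>uminus ` {1..\<lfloor>B\<rfloor>}. e (\<beta> * of_int x ^ k)) = S'"
    unfolding S'_def by (subst sum.reindex) (auto simp: inj_on_def)
  finally have f: "weyl_f k B \<beta> = S + S'" .
  \<comment> \<open>For odd \<open>k\<close> the negative half is the complex conjugate of the positive one.\<close>
  have "norm S' = norm S"
  proof (cases "even k")
    case True thus ?thesis unfolding S'_def S_def by simp
  next
    case False
    hence "S' = cnj S" unfolding S'_def S_def by (simp add: cnj_sum cnj_e)
    thus ?thesis by simp
  qed
  hence "norm (weyl_f k B \<beta>) \<le> 2 * norm S" unfolding f using norm_triangle_ineq[of S S'] by simp
  thus ?thesis unfolding S_def using assms by simp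
qed

lemma
  fixes A :: real
  assumes "A \<ge> 1"
  shows finite_nonzero_abs_le: "finite {a::int. 0 < \<bar>a\<bar> \<and> real_of_int \<bar>a\<bar> \<le> A}"
    and card_nonzero_abs_le: "real (card {a::int. 0 < \<bar>a\<bar> \<and> real_of_int \<bar>a\<bar> \<le> A}) \<le> 2 * A"
proof -
  have eq: "{a::int. 0 < \<bar>a\<bar> \<and> real_of_int \<bar>a\<bar> \<le> A} = {1..\<lfloor>A\<rfloor>} \<union> uminus ` {1..\<lfloor>A\<rfloor>}"
    using int_abs_range_eq[of A] by (simp add: int_one_le_iff_zero_less)
  show "finite {a::int. 0 < \<bar>a\<bar> \<and> real_of_int \<bar>a\<bar> \<le> A}" unfolding eq by simp
  have "card ({1..\<lfloor>A\<rfloor>} \<union> uminus ` {1..\<lfloor>A\<rfloor>}) \<le> 2 * nat \<lfloor>A\<rfloor>"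
    using card_Un_le[of "{1..\<lfloor>A\<rfloor>}" "uminus ` {1..\<lfloor>A\<rfloor>}"] card_image_le[of "{1..\<lfloor>A\<rfloor>}" uminus] by simp
  moreover have "real (nat \<lfloor>A\<rfloor>) \<le> A" using assms by linarith
  ultimately show "real (card {a::int. 0 < \<bar>a\<bar> \<and> real_of_int \<bar>a\<bar> \<le> A}) \<le> 2 * A"
    unfolding eq by linarith
qed

lemma card_shift_lists_containing_zero:
  "card {hs \<in> shift_lists N j. 0 \<in> set hs} \<le> j * (2*N+1)^(j-1)"
proof (induction j)
  case 0
  have "{hs \<in> shift_lists N 0. 0 \<in> set hs} = {}" unfolding shift_lists_def by auto
  thus ?case by (simp only: card.empty)
next
  case (Suc j)
  let ?H = "{- int N..int N}" and ?Z = "{hs \<in> shift_lists N j. 0 \<in> set hs}"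
  have fin: "finite ?Z" using finite_shift_lists by simp
  have "{hs \<in> shift_lists N (Suc j). 0 \<in> set hs} \<subseteq> (#) 0 ` shift_lists N j \<union> (\<lambda>(h, hs). h # hs) ` (?H \<times> ?Z)"
  proof
    fix xs assume xs: "xs \<in> {hs \<in> shift_lists N (Suc j). 0 \<in> set hs}"
    then obtain h hs where "xs = h # hs" "h \<in> ?H" "hs \<in> shift_lists N j"
      unfolding shift_lists_Suc by auto
    thus "xs \<in> (#) 0 ` shift_lists N j \<union> (\<lambda>(h, hs). h # hs) ` (?H \<times> ?Z)"
      using xs by (cases "h = 0") force+
  qed
  hence "card {hs \<in> shift_lists N (Suc j). 0 \<in> set hs}
      \<le> card ((#) 0 ` shift_lists N j \<union> (\<lambda>(h, hs). h # hs) ` (?H \<times> ?Z))"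
    using fin finite_shift_lists by (intro card_mono) auto
  also have "\<dots> \<le> card ((#) 0 ` shift_lists N j) + card ((\<lambda>(h, hs). h # hs) ` (?H \<times> ?Z))"
    by (rule card_Un_le)
  also have "\<dots> \<le> card (shift_lists N j) + card (?H \<times> ?Z)"
    by (intro add_mono card_image_le) (use fin finite_shift_lists in auto)
  also have "\<dots> \<le> (2*N+1)^j + (2*N+1) * (j * (2*N+1)^(j-1))"
  proof -
    have "card ?H = 2*N+1" by simp
    hence "card (?H \<times> ?Z) \<le> (2*N+1) * (j * (2*N+1)^(j-1))"
      unfolding card_cartesian_product by (simp only:) (rule mult_le_mono2[OF Suc.IH])
    thus ?thesis by (simp add: card_shift_lists)
  qed
  also have "\<dots> = Suc j * (2*N+1)^(Suc j - 1)"
    by (cases j) (simp_all add: algebra_simps)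
  finally show ?case .
qed

definition int_divisors :: "nat \<Rightarrow> int set" where
  "int_divisors n = {d. d dvd int n}"

lemma
  assumes "n \<ge> 1"
  shows finite_int_divisors: "finite (int_divisors n)"
    and card_int_divisors: "card (int_divisors n) \<le> 2 * divisor_count n"
proof -
  let ?D = "{d::nat. d dvd n}"
  have finD: "finite ?D" using assms by simp
  have sub: "int_divisors n \<subseteq> int ` ?D \<union> (\<lambda>d. - int d) ` ?D"
  proof
    fix d assume "d \<in> int_divisors n"
    hence "\<bar>d\<bar> dvd int n" unfolding int_divisors_def by simp
    hence nd: "nat \<bar>d\<bar> dvd n" by (metis abs_ge_zero int_nat_eq of_nat_dvd_iff)
    show "d \<in> int ` ?D \<union> (\<lambda>d. - int d) ` ?D"
    proof (cases "d \<ge> 0")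
      case True thus ?thesis using nd by (auto intro!: image_eqI[of _ _ "nat d"])
    next
      case False
      hence "d = - int (nat \<bar>d\<bar>)" by simp
      thus ?thesis using nd by blast
    qed
  qed
  have fin: "finite (int ` ?D \<union> (\<lambda>d. - int d) ` ?D)" using finD by simp
  thus "finite (int_divisors n)" using sub by (rule finite_subset[rotated])
  have "card (int_divisors n) \<le> card (int ` ?D \<union> (\<lambda>d. - int d) ` ?D)"
    using fin sub by (rule card_mono)
  also have "\<dots> \<le> 2 * divisor_count n"
    unfolding divisor_count_def
    using card_Un_le[of "int ` ?D" "(\<lambda>d. - int d) ` ?D"] card_image_le[OF finD, of int] card_image_le[OF finD, of "\<lambda>d. - int d"]
    by linarith
  finally show "card (int_divisors n) \<le> 2 * divisor_count n" .
qed

lemma card_factorisations_le: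
  fixes c :: int
  assumes "n \<ge> 1"
  shows "finite {(a, hs). length hs = j \<and> \<bar>a * c * prod_list hs\<bar> = int n}"
    and "card {(a, hs). length hs = j \<and> \<bar>a * c * prod_list hs\<bar> = int n} \<le> (2 * divisor_count n) ^ Suc j"
proof -
  let ?F = "{(a, hs). length hs = j \<and> \<bar>a * c * prod_list hs\<bar> = int n}"
  let ?G = "int_divisors n \<times> {hs. set hs \<subseteq> int_divisors n \<and> length hs = j}"
  have "(a, hs) \<in> ?G" if len: "length hs = j" and W: "\<bar>a * c * prod_list hs\<bar> = int n" for a hs
  proof -
    have n_eq: "int n = \<bar>a * (c * prod_list hs)\<bar>" using W by (simp add: mult.assoc)
    hence "a dvd int n" by simp
    moreover have "h dvd int n" if "h \<in> set hs" for h
      using prod_list_dvd[OF that] unfolding n_eq by (simp add: dvd_mult)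
    ultimately show ?thesis using len unfolding int_divisors_def by auto
  qed
  hence sub: "?F \<subseteq> ?G" by auto
  have fin: "finite ?G" using finite_int_divisors[OF assms] by (simp add: finite_lists_length_eq)
  thus "finite ?F" using sub by (rule finite_subset[rotated])
  have "card ?F \<le> card ?G" using fin sub by (rule card_mono)
  also have "card ?G = card (int_divisors n) ^ Suc j"
    using finite_int_divisors[OF assms] by (simp add: card_cartesian_product card_lists_length_eq)
  also have "\<dots> \<le> (2 * divisor_count n) ^ Suc j"
    using card_int_divisors[OF assms] by (rule power_mono) simp
  finally show "card ?F \<le> (2 * divisor_count n) ^ Suc j" .
qed

lemma abs_prod_list_le:
  assumes "set hs \<subseteq> {- int N..int N}"
  shows "\<bar>prod_list hs\<bar> \<le> int N ^ length hs"
  using assms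
proof (induction hs)
  case (Cons h hs)
  hence "\<bar>h\<bar> \<le> int N" "\<bar>prod_list hs\<bar> \<le> int N ^ length hs" by auto
  thus ?case by (simp add: abs_mult mult_mono)
qed simp

lemma abs_frequency_le:
  fixes a :: int
  assumes "real_of_int \<bar>a\<bar> \<le> A" "set hs \<subseteq> {- int N..int N}" "length hs = k - 1"
  shows "\<bar>a * fact k * prod_list hs\<bar> \<le> \<lfloor>A * fact k * real N ^ (k-1)\<rfloor>"
proof -
  have "\<bar>prod_list hs\<bar> \<le> int N ^ (k-1)" using abs_prod_list_le[OF assms(2)] assms(3) by simp
  hence "real_of_int \<bar>prod_list hs\<bar> \<le> real_of_int (int N ^ (k-1))" by (simp only: of_int_le_iff)
  hence "real_of_int \<bar>prod_list hs\<bar> \<le> real N ^ (k-1)" by simp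
  hence "real_of_int \<bar>a\<bar> * fact k * real_of_int \<bar>prod_list hs\<bar> \<le> A * fact k * real N ^ (k-1)"
    using assms(1) by (intro mult_mono) auto
  thus ?thesis by (simp add: le_floor_iff abs_mult)
qed

lemma sum_comp_le_max_fibre_sum:
  fixes g :: "'b \<Rightarrow> real"
  assumes "finite Z" "finite S" "v ` Z \<subseteq> S"
    and "\<And>n. n \<in> S \<Longrightarrow> real (card {z\<in>Z. v z = n}) \<le> c" "\<And>n. n \<in> S \<Longrightarrow> g n \<ge> 0"
  shows "(\<Sum>z\<in>Z. g (v z)) \<le> c * (\<Sum>n\<in>S. g n)"
proof -
  have "(\<Sum>z\<in>Z. g (v z)) = (\<Sum>n\<in>S. \<Sum>z\<in>{z\<in>Z. v z = n}. g (v z))"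
    using assms(1-3) by (rule sum.group[symmetric])
  also have "\<dots> = (\<Sum>n\<in>S. real (card {z\<in>Z. v z = n}) * g n)" by simp
  also have "\<dots> \<le> (\<Sum>n\<in>S. c * g n)" using assms(4,5) by (intro sum_mono mult_right_mono) auto
  finally show ?thesis by (simp add: sum_distrib_left)
qed

section \<open>The moment bound\<close>

lemma sum_weyl_moment_le_sum_lin_bound:
  fixes I :: "int set" and B \<alpha> :: real
  assumes "k \<ge> 1" "B \<ge> 1"
  defines "N \<equiv> nat \<lfloor>B\<rfloor>"
  shows "(\<Sum>a\<in>I. norm (weyl_f k B (real_of_int a * \<alpha>)) ^ (2^(k-1)))
    \<le> 2^(2^(k-1)) * real (2*N+1) ^ (2^(k-1) - k) *
       (\<Sum>(a, hs)\<in>I \<times> shift_lists N (k-1). lin_bound N (real_of_int (a * fact k * prod_list hs) * \<alpha>))"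
proof -
  define M :: nat where "M = 2^(k-1)"
  have "norm (weyl_f k B (real_of_int a * \<alpha>)) ^ M \<le> 2^M * real (2*N+1) ^ (M - k) *
      (\<Sum>hs\<in>shift_lists N (k-1). lin_bound N (real_of_int (a * fact k * prod_list hs) * \<alpha>))" for a
  proof -
    define S where "S = (\<Sum>x\<in>{1..int N}. e ((real_of_int a * \<alpha>) * of_int x ^ k))"
    have "norm (weyl_f k B (real_of_int a * \<alpha>)) ^ M \<le> (2 * norm S) ^ M"
      unfolding S_def N_def by (intro power_mono norm_weyl_f_le assms(2)) simp
    also have "\<dots> = 2^M * norm S ^ M" by (simp add: power_mult_distrib)
    also have "norm S ^ M \<le> real (2*N+1) ^ (M - k) *
        (\<Sum>hs\<in>shift_lists N (k-1). lin_bound N ((real_of_int a * \<alpha>) * fact k * of_int (prod_list hs)))"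
      unfolding S_def M_def using assms(1) by (rule norm_sum_e_monomial_pow_le)
    finally show ?thesis by (simp add: mult_ac mult_left_mono)
  qed
  hence "(\<Sum>a\<in>I. norm (weyl_f k B (real_of_int a * \<alpha>)) ^ M) \<le> (\<Sum>a\<in>I. 2^M * real (2*N+1) ^ (M - k) *
      (\<Sum>hs\<in>shift_lists N (k-1). lin_bound N (real_of_int (a * fact k * prod_list hs) * \<alpha>)))"
    by (rule sum_mono)
  thus ?thesis unfolding M_def by (simp add: sum_distrib_left sum.cartesian_product case_prod_unfold)
qed

lemma sum_lin_bound_degenerate_le:
  assumes "finite I" "0 \<notin> I" "k \<ge> 1"
  shows "(\<Sum>(a, hs)\<in>{(a, hs)\<in>I \<times> shift_lists N (k-1). a * fact k * prod_list hs = 0}.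
            lin_bound N (real_of_int (a * fact k * prod_list hs) * \<alpha>))
    \<le> real (card I) * real (k-1) * real (2*N+1)^(k-2) * real N"
proof -
  let ?Z = "{(a, hs)\<in>I \<times> shift_lists N (k-1). a * fact k * prod_list hs = 0}"
  have "?Z \<subseteq> I \<times> {hs \<in> shift_lists N (k-1). 0 \<in> set hs}"
  proof clarify
    fix a hs assume "a \<in> I" "hs \<in> shift_lists N (k-1)" "a * fact k * prod_list hs = 0"
    moreover from this(1) have "a \<noteq> 0" using assms(2) by blast
    ultimately show "0 \<in> set hs" by (simp add: prod_list_zero_iff)
  qed
  hence "card ?Z \<le> card (I \<times> {hs \<in> shift_lists N (k-1). 0 \<in> set hs})"
    using assms(1) finite_shift_lists by (intro card_mono) auto
  also have "\<dots> = card I * card {hs \<in> shift_lists N (k-1). 0 \<in> set hs}"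
    by (rule card_cartesian_product)
  also have "\<dots> \<le> card I * ((k-1) * (2*N+1)^(k-2))"
    using card_shift_lists_containing_zero[of N "k-1"] by (intro mult_le_mono2) (simp add: numeral_2_eq_2)
  finally have "real (card ?Z) \<le> real (card I * ((k-1) * (2*N+1)^(k-2)))"
    by (rule of_nat_mono)
  hence "real (card ?Z) * real N \<le> real (card I) * real (k-1) * real (2*N+1)^(k-2) * real N"
    by (intro mult_right_mono) (simp_all add: mult.assoc)
  moreover have "(\<Sum>(a, hs)\<in>?Z. lin_bound N (real_of_int (a * fact k * prod_list hs) * \<alpha>))
      \<le> real (card ?Z) * real N"
    using sum_mono[of ?Z "\<lambda>(a, hs). lin_bound N (real_of_int (a * fact k * prod_list hs) * \<alpha>)" "\<lambda>_. real N"]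
    by (simp add: lin_bound_le case_prod_unfold)
  ultimately show ?thesis by linarith
qed

lemma lin_bound_of_int_eq_abs: "lin_bound N (real_of_int m * \<alpha>) = lin_bound N (real (nat \<bar>m\<bar>) * \<alpha>)"
proof (cases "m \<ge> 0")
  case False
  hence "real_of_int m * \<alpha> = - (real (nat \<bar>m\<bar>) * \<alpha>)" by simp
  thus ?thesis by simp
qed simp

lemma card_frequency_fibre_le:
  fixes C\<tau> \<epsilon>1 :: real
  assumes "k \<ge> 1" "C\<tau> > 0" "\<epsilon>1 > 0"
    and divisor_bound: "\<And>n. n \<ge> 1 \<Longrightarrow> real (divisor_count n) \<le> C\<tau> * real n powr \<epsilon>1"
    and n: "1 \<le> n" "n \<le> X"
  shows "real (card {(a, hs). length hs = k - 1 \<and> \<bar>a * fact k * prod_list hs\<bar> = int n})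
           \<le> (2 * C\<tau> * real X powr \<epsilon>1)^k"
proof -
  have "card {(a, hs). length hs = k - 1 \<and> \<bar>a * fact k * prod_list hs\<bar> = int n} \<le> (2 * divisor_count n) ^ k"
    using card_factorisations_le(2)[OF n(1), of "k - 1" "fact k"] assms(1) by (simp add: Suc_diff_1)
  hence "real (card {(a, hs). length hs = k - 1 \<and> \<bar>a * fact k * prod_list hs\<bar> = int n})
      \<le> real ((2 * divisor_count n) ^ k)"
    by (simp only: of_nat_le_iff)
  moreover have "real n powr \<epsilon>1 \<le> real X powr \<epsilon>1" using n \<open>\<epsilon>1 > 0\<close> by (intro powr_mono2) auto
  hence "C\<tau> * real n powr \<epsilon>1 \<le> C\<tau> * real X powr \<epsilon>1" using \<open>C\<tau> > 0\<close> by simp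
  hence "real (divisor_count n) \<le> C\<tau> * real X powr \<epsilon>1"
    using divisor_bound[OF n(1)] by linarith
  hence "(2 * real (divisor_count n)) ^ k \<le> (2 * C\<tau> * real X powr \<epsilon>1)^k"
    by (intro power_mono) auto
  ultimately show ?thesis by simp
qed

lemma sum_lin_bound_nondegenerate_le:
  fixes A \<alpha> C\<tau> \<epsilon>1 :: real and r :: int and q N :: nat
  assumes k: "k \<ge> 1" and "C\<tau> > 0" "\<epsilon>1 > 0"
    and divisor_bound: "\<And>n. n \<ge> 1 \<Longrightarrow> real (divisor_count n) \<le> C\<tau> * real n powr \<epsilon>1"
    and q1: "q \<ge> 1" and cop: "coprime r (int q)"
    and app: "\<bar>\<alpha> - real_of_int r / real q\<bar> \<le> 1 / (real q)^2"
  defines "I \<equiv> {a::int. 0 < \<bar>a\<bar> \<and> real_of_int \<bar>a\<bar> \<le> A}"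
    and "X \<equiv> nat \<lfloor>A * fact k * real N ^ (k-1)\<rfloor>"
  assumes "A \<ge> 1"
  shows "(\<Sum>(a, hs)\<in>{(a, hs)\<in>I \<times> shift_lists N (k-1). a * fact k * prod_list hs \<noteq> 0}.
            lin_bound N (real_of_int (a * fact k * prod_list hs) * \<alpha>))
    \<le> (2 * C\<tau> * real X powr \<epsilon>1)^k * ((real X / real q + 1) * (4 * real N + 4 * real q * (1 + ln (real q))))"
proof -
  let ?Z = "{(a, hs)\<in>I \<times> shift_lists N (k-1). a * fact k * prod_list hs \<noteq> 0}"
  define v where "v z = nat \<bar>fst z * fact k * prod_list (snd z)\<bar>" for z :: "int \<times> int list"
  have "finite (I \<times> shift_lists N (k-1))"
    using finite_nonzero_abs_le[OF \<open>A \<ge> 1\<close>] finite_shift_lists unfolding I_def by simp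
  hence finZ: "finite ?Z" by (rule finite_subset[rotated]) auto
  have range: "v z \<in> {1..X}" if "z \<in> ?Z" for z
  proof -
    obtain a hs where "z = (a, hs)" by (cases z)
    with that have z: "z = (a, hs)" "real_of_int \<bar>a\<bar> \<le> A" "set hs \<subseteq> {- int N..int N}"
      "length hs = k - 1" "a * fact k * prod_list hs \<noteq> 0"
      unfolding I_def shift_lists_def by auto
    moreover have "1 \<le> \<bar>a * fact k * prod_list hs\<bar>" using z(5) by linarith
    ultimately show ?thesis using abs_frequency_le[OF z(2-4)] unfolding v_def X_def by (simp add: nat_mono)
  qed
  have fibres: "real (card {z\<in>?Z. v z = n}) \<le> (2 * C\<tau> * real X powr \<epsilon>1)^k" if n: "n \<in> {1..X}" for n
  proof -
    have "{z\<in>?Z. v z = n} \<subseteq> {(a, hs). length hs = k - 1 \<and> \<bar>a * fact k * prod_list hs\<bar> = int n}"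
      unfolding v_def shift_lists_def by auto
    hence "card {z\<in>?Z. v z = n} \<le> card {(a, hs). length hs = k - 1 \<and> \<bar>a * fact k * prod_list hs\<bar> = int n}"
      using card_factorisations_le(1)[of n] n by (intro card_mono) auto
    thus ?thesis
      using card_frequency_fibre_le[OF k \<open>C\<tau> > 0\<close> \<open>\<epsilon>1 > 0\<close> divisor_bound, of n X] n by simp
  qed
  have "(\<Sum>(a, hs)\<in>?Z. lin_bound N (real_of_int (a * fact k * prod_list hs) * \<alpha>))
      = (\<Sum>z\<in>?Z. lin_bound N (real (v z) * \<alpha>))"
    unfolding v_def by (intro sum.cong refl) (auto simp only: lin_bound_of_int_eq_abs fst_conv snd_conv split: prod.splits)
  also have "\<dots> \<le> (2 * C\<tau> * real X powr \<epsilon>1)^k * (\<Sum>n\<in>{1..X}. lin_bound N (real n * \<alpha>))"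
    using finZ range fibres
    by (intro sum_comp_le_max_fibre_sum[where g = "\<lambda>n. lin_bound N (real n * \<alpha>)"])
      (auto simp: lin_bound_nonneg)
  also have "\<dots> \<le> (2 * C\<tau> * real X powr \<epsilon>1)^k * ((real X / real q + 1) * (4 * real N + 4 * real q * (1 + ln (real q))))"
    using \<open>C\<tau> > 0\<close> by (intro mult_left_mono sum_lin_bound_multiples_le[OF q1 cop app]) auto
  finally show ?thesis .
qed

lemma weyl_moment_le:
  fixes A B \<alpha> C\<tau> \<epsilon>1 :: real and r :: int and q :: nat
  assumes k: "k \<ge> 2" and "C\<tau> > 0" "\<epsilon>1 > 0"
    and divisor_bound: "\<And>n. n \<ge> 1 \<Longrightarrow> real (divisor_count n) \<le> C\<tau> * real n powr \<epsilon>1"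
    and "A \<ge> 1" "B \<ge> 1" and q1: "q \<ge> 1" and cop: "coprime r (int q)"
    and app: "\<bar>\<alpha> - real_of_int r / real q\<bar> \<le> 1 / (real q)^2"
  defines "N \<equiv> nat \<lfloor>B\<rfloor>"
  defines "X \<equiv> nat \<lfloor>A * fact k * real N ^ (k-1)\<rfloor>"
  shows "(\<Sum>a\<in>{a::int. 0 < \<bar>a\<bar> \<and> real_of_int \<bar>a\<bar> \<le> A}.
               norm (weyl_f k B (real_of_int a * \<alpha>)) ^ (2^(k-1)))
    \<le> 2^(2^(k-1)) * real (2*N+1) ^ (2^(k-1) - k) *
        (2 * A * real (k-1) * real (2*N+1)^(k-2) * real N
         + (2 * C\<tau> * real X powr \<epsilon>1)^k * ((real X / real q + 1) * (4 * real N + 4 * real q * (1 + ln (real q)))))"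
proof -
  define I where "I = {a::int. 0 < \<bar>a\<bar> \<and> real_of_int \<bar>a\<bar> \<le> A}"
  define Z where "Z = I \<times> shift_lists N (k-1)"
  define f where "f a hs = lin_bound N (real_of_int (a * fact k * prod_list hs) * \<alpha>)" for a hs
  have "finite Z" unfolding Z_def I_def
    using finite_nonzero_abs_le[OF \<open>A \<ge> 1\<close>] finite_shift_lists by simp
  hence "(\<Sum>(a, hs)\<in>Z. f a hs)
      = (\<Sum>(a, hs)\<in>{(a, hs)\<in>Z. a * fact k * prod_list hs = 0}. f a hs)
        + (\<Sum>(a, hs)\<in>{(a, hs)\<in>Z. a * fact k * prod_list hs \<noteq> 0}. f a hs)"
    by (subst sum.union_disjoint[symmetric]) (auto intro: sum.cong rev_finite_subset)
  also have "\<dots> \<le> real (card I) * real (k-1) * real (2*N+1)^(k-2) * real N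
      + (2 * C\<tau> * real X powr \<epsilon>1)^k * ((real X / real q + 1) * (4 * real N + 4 * real q * (1 + ln (real q))))"
    unfolding Z_def f_def I_def X_def
    using k by (intro add_mono sum_lin_bound_degenerate_le finite_nonzero_abs_le \<open>A \<ge> 1\<close>
        sum_lin_bound_nondegenerate_le[where r = r] \<open>C\<tau> > 0\<close> \<open>\<epsilon>1 > 0\<close> divisor_bound q1 cop app) auto
  also have "\<dots> \<le> 2 * A * real (k-1) * real (2*N+1)^(k-2) * real N
      + (2 * C\<tau> * real X powr \<epsilon>1)^k * ((real X / real q + 1) * (4 * real N + 4 * real q * (1 + ln (real q))))"
    using card_nonzero_abs_le[OF \<open>A \<ge> 1\<close>] unfolding I_def by (intro add_right_mono mult_right_mono) auto
  finally have sum_le: "(\<Sum>(a, hs)\<in>Z. f a hs) \<le> 2 * A * real (k-1) * real (2*N+1)^(k-2) * real N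
      + (2 * C\<tau> * real X powr \<epsilon>1)^k * ((real X / real q + 1) * (4 * real N + 4 * real q * (1 + ln (real q))))" .
  have "(\<Sum>a\<in>I. norm (weyl_f k B (real_of_int a * \<alpha>)) ^ (2^(k-1)))
      \<le> 2^(2^(k-1)) * real (2*N+1) ^ (2^(k-1) - k) * (\<Sum>(a, hs)\<in>Z. f a hs)"
    unfolding Z_def f_def N_def using k \<open>B \<ge> 1\<close> by (intro sum_weyl_moment_le_sum_lin_bound) auto
  also have "\<dots> \<le> 2^(2^(k-1)) * real (2*N+1) ^ (2^(k-1) - k) *
      (2 * A * real (k-1) * real (2*N+1)^(k-2) * real N
       + (2 * C\<tau> * real X powr \<epsilon>1)^k * ((real X / real q + 1) * (4 * real N + 4 * real q * (1 + ln (real q)))))"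
    using sum_le by (rule mult_left_mono) simp
  finally show ?thesis unfolding I_def .
qed

section \<open>Bookkeeping of the final estimate\<close>

\<comment> \<open>Each of the four terms of the left-hand side is at most \<open>K L\<close> times a term on the right.\<close>
lemma four_terms_le:
  fixes A B K L b u q :: real
  assumes A: "A \<ge> 1" and B: "1 \<le> B" "B \<le> u" and b: "b \<ge> 1" and q: "q > 0"
    and K: "K \<ge> 1" and L: "L \<ge> 1"
  shows "b * ((K * A * u / q + 1) * (B + q * L)) \<le> 2 * K * L * (A * b * u * B / q + A * b * u + q * b)"
proof -
  have KL: "1 \<le> K * L" using mult_mono[OF K L] K by simp
  have "1 * u \<le> A * u" using A B by (intro mult_right_mono) auto
  hence "B \<le> A * u" using B by linarith
  hence "b * B \<le> b * (A * u)" using b by simp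
  also have "\<dots> \<le> K * L * (A * b * u)"
    using mult_right_mono[OF KL, of "A * b * u"] A B b by (simp add: mult_ac)
  finally have bB: "b * B \<le> K * L * (A * b * u)" .
  have "b * ((K * A * u / q + 1) * (B + q * L))
      = K * (A * b * u * B / q) + K * L * (A * b * u) + b * B + L * (q * b)"
    using q by (simp add: field_simps)
  also have "\<dots> \<le> K * L * (A * b * u * B / q) + K * L * (A * b * u) + K * L * (A * b * u) + K * L * (q * b)"
    using bB K L A B b q by (intro add_mono mult_right_mono) auto
  also have "\<dots> = K * L * (A * b * u * B / q + 2 * (A * b * u) + q * b)"
    by (simp add: algebra_simps)
  also have "\<dots> \<le> K * L * (2 * (A * b * u * B / q + A * b * u + q * b))"
  proof (rule mult_left_mono)
    have "x + 2 * y + z \<le> 2 * (x + y + z)" if "0 \<le> x" "0 \<le> z" for x y z :: real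
      using that by simp
    moreover have "0 \<le> A * b * u * B / q" "0 \<le> q * b" using A B b q by simp_all
    ultimately show "A * b * u * B / q + 2 * (A * b * u) + q * b \<le> 2 * (A * b * u * B / q + A * b * u + q * b)"
      by blast
  qed (use K L in simp)
  finally show ?thesis by (simp add: mult_ac)
qed

lemma weyl_terms_le:
  fixes A B q K L N X c :: real and k M :: nat
  assumes k: "k \<ge> 2" "k \<le> M" and A: "A \<ge> 1" and B: "B \<ge> 1" and q: "q > 0"
    and K: "K \<ge> 1" and L: "L \<ge> 1" and c: "c \<ge> 0" and N: "1 \<le> N" "N \<le> B"
    and X: "0 \<le> X" "X \<le> K * A * B^(k-1)"
  shows "(2*N+1)^(M-k) * (2 * A * real (k-1) * (2*N+1)^(k-2) * N + c * ((X / q + 1) * (4*N + 4*q*L)))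
    \<le> 3^(M-k) * (2 * real (k-1) * 3^(k-2) + 8 * K * c * L) * (A * B^M * (1/q + 1/B + q / (A * B^k)))"
proof -
  define b where "b = B^(M-k)"
  define u where "u = B^(k-1)"
  define R where "R = A * B^M * (1/q + 1/B + q / (A * B^k))"
  obtain j where kj: "k = j + 2" using le_Suc_ex[OF k(1)] by (auto simp: add.commute)
  have Bk: "B^k = u * B" and Bk2: "B^(k-2) * B = u" unfolding u_def kj by simp_all
  have "B^M = B^(M-k) * B^k" using k(2) by (simp flip: power_add)
  moreover have u: "B \<le> u" "b \<ge> 1"
    using k B power_increasing[of 1 "k-1" B] unfolding u_def b_def by auto
  ultimately have R_eq: "R = A * b * u * B / q + A * b * u + q * b"
    unfolding R_def b_def Bk using A B q by (simp add: field_simps)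
  have "(2*N+1)^(M-k) \<le> (3*B)^(M-k)" using N by (intro power_mono) auto
  hence h1: "(2*N+1)^(M-k) \<le> 3^(M-k) * b" unfolding b_def by (simp add: power_mult_distrib)
  have "(2*N+1)^(k-2) * N \<le> (3*B)^(k-2) * B"
    using N by (intro mult_mono power_mono) auto
  hence "2 * A * real (k-1) * ((2*N+1)^(k-2) * N) \<le> 2 * A * real (k-1) * ((3*B)^(k-2) * B)"
    using A by (intro mult_left_mono) auto
  hence h2: "2 * A * real (k-1) * (2*N+1)^(k-2) * N \<le> 2 * real (k-1) * 3^(k-2) * (A * u)"
    unfolding Bk2[symmetric] by (simp add: power_mult_distrib mult_ac)
  have "X / q + 1 \<le> K * A * u / q + 1" using X q unfolding u_def by (simp add: divide_right_mono)
  moreover have "4*N + 4*q*L \<le> 4 * (B + q*L)" using N by simp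
  ultimately have "(X / q + 1) * (4*N + 4*q*L) \<le> (K * A * u / q + 1) * (4 * (B + q*L))"
    using X q L K A N u B by (intro mult_mono) auto
  hence "b * (c * ((X / q + 1) * (4*N + 4*q*L))) \<le> b * (c * ((K * A * u / q + 1) * (4 * (B + q*L))))"
    using c u by (intro mult_left_mono) auto
  also have "\<dots> = 4 * c * (b * ((K * A * u / q + 1) * (B + q*L)))"
    by (simp only: mult_ac)
  also have "\<dots> \<le> 4 * c * (2 * K * L * R)"
    unfolding R_eq using four_terms_le[OF A B u(1) u(2) q K L] c by (intro mult_left_mono) auto
  finally have h3: "b * (c * ((X / q + 1) * (4*N + 4*q*L))) \<le> 8 * K * c * L * R"
    by (simp add: mult_ac)
  have "0 \<le> 2 * A * real (k-1) * (2*N+1)^(k-2) * N + c * ((X / q + 1) * (4*N + 4*q*L))"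
    using A c X q L N by simp
  hence "(2*N+1)^(M-k) * (2 * A * real (k-1) * (2*N+1)^(k-2) * N + c * ((X / q + 1) * (4*N + 4*q*L)))
      \<le> 3^(M-k) * b * (2 * real (k-1) * 3^(k-2) * (A * u) + c * ((X / q + 1) * (4*N + 4*q*L)))"
    using u by (intro mult_mono[OF h1 add_right_mono[OF h2]]) auto
  also have "\<dots> = 3^(M-k) * (2 * real (k-1) * 3^(k-2) * (A * u * b) + b * (c * ((X / q + 1) * (4*N + 4*q*L))))"
    by (simp add: algebra_simps)
  also have "\<dots> \<le> 3^(M-k) * (2 * real (k-1) * 3^(k-2) * R + 8 * K * c * L * R)"
  proof -
    have "A * u * b \<le> R" unfolding R_eq using A u B q by simp
    thus ?thesis using h3 k by (intro mult_left_mono add_mono) auto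
  qed
  finally show ?thesis unfolding R_def by (simp add: algebra_simps)
qed

lemma one_plus_ln_le_powr:
  fixes x \<delta> :: real
  assumes "x \<ge> 1" "\<delta> > 0"
  shows "1 + ln x \<le> (1 + 1/\<delta>) * x powr \<delta>"
proof -
  have "ln x \<le> x powr \<delta> / \<delta>" using assms by (rule ln_powr_bound)
  moreover have "1 \<le> x powr \<delta>" using assms by (intro ge_one_powr_ge_zero) auto
  ultimately show ?thesis by (simp add: distrib_right)
qed

lemma powr_frequency_le:
  fixes A B X \<epsilon> :: real
  assumes \<epsilon>: "\<epsilon> > 0" and k: "k \<ge> 1" and A: "A \<ge> 1" and B: "B \<ge> 1"
    and X: "0 \<le> X" "X \<le> fact k * A * B^(k-1)"
  shows "(X powr (\<epsilon> / (2 * real k ^ 2))) ^ k \<le> fact k powr (\<epsilon> / (2 * real k)) * (A * B) powr (\<epsilon>/2)"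
proof (cases "X = 0")
  case False
  have "A * B^(k-1) \<le> A^k * B^k"
    using A B k power_increasing[of 1 k A] power_increasing[of "k-1" k B] by (intro mult_mono) auto
  hence "fact k * (A * B^(k-1)) \<le> fact k * (A * B)^k"
    by (intro mult_left_mono) (simp_all add: power_mult_distrib)
  moreover have "fact k * A * B^(k-1) = fact k * (A * B^(k-1))" by (simp only: mult.assoc)
  ultimately have X_le: "X \<le> fact k * (A * B)^k" using X(2) by linarith
  have "(X powr (\<epsilon> / (2 * real k ^ 2))) ^ k = X powr (\<epsilon> / (2 * real k ^ 2) * real k)"
    using X False powr_realpow[of "X powr (\<epsilon> / (2 * real k ^ 2))" k] by (simp add: powr_powr)
  also have "\<epsilon> / (2 * real k ^ 2) * real k = \<epsilon> / (2 * real k)"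
    using k by (simp add: power2_eq_square)
  also have "X powr (\<epsilon> / (2 * real k)) \<le> (fact k * (A * B)^k) powr (\<epsilon> / (2 * real k))"
    using X X_le \<epsilon> by (intro powr_mono2) auto
  also have "\<dots> = fact k powr (\<epsilon> / (2 * real k)) * (A * B) powr (\<epsilon>/2)"
    using A B k by (simp add: powr_mult powr_realpow[symmetric] powr_powr)
  finally show ?thesis .
qed (use k in \<open>simp add: zero_power\<close>)

lemma divisor_log_factor_le:
  fixes A B X C\<tau> \<epsilon> :: real and q k :: nat
  assumes \<epsilon>: "\<epsilon> > 0" and k: "k \<ge> 1" and "C\<tau> > 0" and A: "A \<ge> 1" and B: "B \<ge> 1" and q: "q \<ge> 1"
    and X: "0 \<le> X" "X \<le> fact k * A * B^(k-1)"
  shows "(2 * C\<tau> * X powr (\<epsilon> / (2 * real k ^ 2)))^k * (1 + ln (real q))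
    \<le> (2 * C\<tau>)^k * fact k powr (\<epsilon> / (2 * real k)) * (1 + 2/\<epsilon>) * (A * B * real q) powr \<epsilon>"
proof -
  have log: "1 + ln (real q) \<le> (1 + 2/\<epsilon>) * real q powr (\<epsilon>/2)"
    using one_plus_ln_le_powr[of "real q" "\<epsilon>/2"] q \<epsilon> by simp
  have "1 \<le> A * B * real q" using A B q by (intro mult_ge1_I) auto
  hence powers: "(A * B) powr (\<epsilon>/2) * real q powr (\<epsilon>/2) \<le> (A * B * real q) powr \<epsilon>"
    using A B \<epsilon> by (simp add: powr_mult[symmetric] powr_mono)
  have "(2 * C\<tau> * X powr (\<epsilon> / (2 * real k ^ 2)))^k * (1 + ln (real q))
      = (2 * C\<tau>)^k * ((X powr (\<epsilon> / (2 * real k ^ 2))) ^ k * (1 + ln (real q)))"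
    by (simp add: power_mult_distrib)
  also have "\<dots> \<le> (2 * C\<tau>)^k * ((fact k powr (\<epsilon> / (2 * real k)) * (A * B) powr (\<epsilon>/2))
      * ((1 + 2/\<epsilon>) * real q powr (\<epsilon>/2)))"
    using \<open>C\<tau> > 0\<close> q
    by (intro mult_left_mono mult_mono[OF powr_frequency_le[OF \<epsilon> k A B X] log]) auto
  also have "\<dots> = (2 * C\<tau>)^k * fact k powr (\<epsilon> / (2 * real k)) * (1 + 2/\<epsilon>)
      * ((A * B) powr (\<epsilon>/2) * real q powr (\<epsilon>/2))"
    by (simp add: mult_ac)
  also have "\<dots> \<le> (2 * C\<tau>)^k * fact k powr (\<epsilon> / (2 * real k)) * (1 + 2/\<epsilon>) * (A * B * real q) powr \<epsilon>"
    using powers \<open>C\<tau> > 0\<close> \<epsilon> by (intro mult_left_mono) auto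
  finally show ?thesis .
qed

definition weyl_const :: "nat \<Rightarrow> real \<Rightarrow> real \<Rightarrow> real" where
  "weyl_const k \<epsilon> C\<tau> = 2^(2^(k-1)) * 3^(2^(k-1) - k) *
     (2 * real (k-1) * 3^(k-2) + 8 * fact k * ((2 * C\<tau>)^k * fact k powr (\<epsilon> / (2 * real k)) * (1 + 2/\<epsilon>)))"

lemma weyl_const_pos: "C\<tau> > 0 \<Longrightarrow> \<epsilon> > 0 \<Longrightarrow> weyl_const k \<epsilon> C\<tau> > 0"
  unfolding weyl_const_def by (intro mult_pos_pos add_nonneg_pos) auto

lemma weyl_moment_le_powr:
  fixes A B \<alpha> C\<tau> \<epsilon> :: real and r :: int and q :: nat
  assumes k: "k \<ge> 2" and \<epsilon>: "\<epsilon> > 0" and "C\<tau> > 0"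
    and divisor_bound: "\<And>n. n \<ge> 1 \<Longrightarrow> real (divisor_count n) \<le> C\<tau> * real n powr (\<epsilon> / (2 * real k ^ 2))"
    and A: "A \<ge> 1" and B: "B \<ge> 1" and q1: "q \<ge> 1" and cop: "coprime r (int q)"
    and app: "\<bar>\<alpha> - real_of_int r / real q\<bar> \<le> 1 / (real q)^2"
  shows "(\<Sum>a\<in>{a::int. 0 < \<bar>a\<bar> \<and> real_of_int \<bar>a\<bar> \<le> A}.
               norm (weyl_f k B (real_of_int a * \<alpha>)) ^ (2^(k-1)))
    \<le> weyl_const k \<epsilon> C\<tau> * A * B ^ (2^(k-1)) * (1 / real q + 1 / B + real q / (A * B ^ k))
        * (A * B * real q) powr \<epsilon>"
proof -
  define M :: nat where "M = 2^(k-1)"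
  define N where "N = nat \<lfloor>B\<rfloor>"
  define X where "X = nat \<lfloor>A * fact k * real N ^ (k-1)\<rfloor>"
  define c where "c = (2 * C\<tau> * real X powr (\<epsilon> / (2 * real k ^ 2)))^k"
  define D where "D = (2 * C\<tau>)^k * fact k powr (\<epsilon> / (2 * real k)) * (1 + 2/\<epsilon>)"
  define R where "R = A * B ^ M * (1 / real q + 1 / B + real q / (A * B ^ k))"
  define P where "P = (A * B * real q) powr \<epsilon>"
  have N: "1 \<le> real N" "real N \<le> B" unfolding N_def using B le_nat_floor[of 1 B] of_nat_floor[of B] by auto
  have X: "real X \<le> fact k * A * B^(k-1)"
  proof -
    have "real X \<le> A * fact k * real N ^ (k-1)" unfolding X_def using A by (intro of_nat_floor) simp
    also have "\<dots> \<le> A * fact k * B ^ (k-1)" using N A by (intro mult_left_mono power_mono) auto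
    finally show ?thesis by (simp add: mult_ac)
  qed
  have "k \<le> M" unfolding M_def using k less_exp[of "k-1"] by linarith
  have "(\<Sum>a\<in>{a::int. 0 < \<bar>a\<bar> \<and> real_of_int \<bar>a\<bar> \<le> A}. norm (weyl_f k B (real_of_int a * \<alpha>)) ^ M)
      \<le> 2^M * (real (2*N+1) ^ (M - k) * (2 * A * real (k-1) * real (2*N+1)^(k-2) * real N
         + c * ((real X / real q + 1) * (4 * real N + 4 * real q * (1 + ln (real q))))))"
    using weyl_moment_le[OF k \<open>C\<tau> > 0\<close> _ divisor_bound A B q1 cop app] \<epsilon> k
    unfolding M_def N_def X_def c_def by (simp add: mult_ac)
  also have "\<dots> \<le> 2^M * (3^(M-k) * (2 * real (k-1) * 3^(k-2) + 8 * fact k * c * (1 + ln (real q))) * R)"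
    using weyl_terms_le[OF k \<open>k \<le> M\<close> A B _ _ _ _ N _ X, of "real q" "1 + ln (real q)" c] q1 \<open>C\<tau> > 0\<close>
    unfolding R_def c_def by (intro mult_left_mono) (auto simp: add.commute)
  also have "\<dots> \<le> 2^M * (3^(M-k) * (2 * real (k-1) * 3^(k-2) + 8 * fact k * (D * P)) * R)"
  proof -
    have "c * (1 + ln (real q)) \<le> D * P"
      unfolding c_def D_def P_def using divisor_log_factor_le[OF \<epsilon> _ \<open>C\<tau> > 0\<close> A B q1 _ X] k by simp
    moreover have "R \<ge> 0" unfolding R_def using A B by simp
    ultimately show ?thesis by (intro mult_left_mono mult_right_mono add_left_mono) (auto simp: mult.assoc)
  qed
  also have "\<dots> \<le> 2^M * (3^(M-k) * ((2 * real (k-1) * 3^(k-2) + 8 * fact k * D) * P) * R)"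
  proof -
    have "1 \<le> P" unfolding P_def using A B q1 \<epsilon> by (auto intro!: ge_one_powr_ge_zero mult_ge1_I)
    hence "2 * real (k-1) * 3^(k-2) * 1 \<le> 2 * real (k-1) * 3^(k-2) * P" by (intro mult_left_mono) auto
    moreover have "R \<ge> 0" unfolding R_def using A B by simp
    ultimately show ?thesis by (intro mult_left_mono mult_right_mono) (auto simp: algebra_simps)
  qed
  also have "\<dots> = weyl_const k \<epsilon> C\<tau> * R * P"
    unfolding weyl_const_def D_def M_def by (simp add: mult_ac)
  finally show ?thesis unfolding R_def P_def M_def by (simp add: mult_ac)
qed

theorem lemma4p3:
  fixes k :: nat and \<epsilon> :: real
  assumes "k \<ge> 3" and "\<epsilon> > 0"
  shows "\<exists>C>0. \<forall>(A::real) (B::real) (\<alpha>::real) (r::int) (q::nat).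
           A \<ge> 1 \<longrightarrow> B \<ge> 1 \<longrightarrow> q \<ge> 1 \<longrightarrow> coprime r (int q) \<longrightarrow>
           \<bar>\<alpha> - real_of_int r / real q\<bar> \<le> 1 / (real q)^2 \<longrightarrow>
           (\<Sum>a\<in>{a::int. 0 < \<bar>a\<bar> \<and> real_of_int \<bar>a\<bar> \<le> A}.
               norm (weyl_f k B (real_of_int a * \<alpha>)) ^ (2^(k-1)))
           \<le> C * A * B ^ (2^(k-1)) * (1 / real q + 1 / B + real q / (A * B ^ k))
               * (A * B * real q) powr \<epsilon>"
proof -
  have "\<epsilon> / (2 * real k ^ 2) > 0" using assms by simp
  then obtain C\<tau> where "C\<tau> > 0"
    and divisor_bound: "\<forall>n. n \<ge> 1 \<longrightarrow> real (divisor_count n) \<le> C\<tau> * real n powr (\<epsilon> / (2 * real k ^ 2))"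
    using divisor_count_le_powr by blast
  show ?thesis
    using assms \<open>C\<tau> > 0\<close> divisor_bound
    by (intro exI[of _ "weyl_const k \<epsilon> C\<tau>"] conjI weyl_const_pos allI impI weyl_moment_le_powr) auto
qed

end
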